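(* Let $\mathcal E$ be a product system and let $F^1,F^2$ be inclusion subsystems of $\mathcal E$. For $t>0$ let $$G_t=\overline{\mathrm{span}}\{x\otimes y:x\in\mathcal E_r\ominus F^1_r,\ y\in\mathcal E_{t-r}\ominus F^2_{t-r}\ \text{for some }0<r<t\}$$ and $G'_t=\mathcal E_t\ominus G_t$. Then $G'=(G'_t)_{t>0}$ is an inclusion subsystem of $\mathcal E$ (i.e. $G'_{s+t}\subset G'_s\otimes G'_t$ under $\mathcal E_{s+t}\cong\mathcal E_s\otimes\mathcal E_t$) and $F^1_t\subset G'_t$, $F^2_t\subset G'_t$ for all $t>0$.
   Context: A product system is a measurable family of separable Hilbert spaces $(\mathcal E_t)_{t>0}$ with associative unitaries $V_{s,t}:\mathcal E_{s+t}\to\mathcal E_s\otimes\mathcal E_t$, used to identify $\mathcal E_{s+t}\cong\mathcal E_s\otimes\mathcal E_t$. An inclusion subsystem is a family of closed subspaces $F_t\subset\mathcal E_t$ with $V_{s,t}(F_{s+t})\subset F_s\otimes F_t$ for all $s,t>0$; with the restricted maps it is an inclusion system (family of Hilbert spaces with associative isometries $E_{s+t}\to E_s\otimes E_t$). *)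

theory Defs
  imports "HOL-Analysis.Analysis"
begin

text \<open>Separable complex Hilbert spaces are modelled concretely as l2(I) for a countable
index set I (every separable Hilbert space is unitarily equivalent to such a space).
The Hilbert tensor product l2(I) (x) l2(J) is l2(I x J) with x (x) y = (a,b) |-> x a * y b.\<close>

definition l2 :: "'i set \<Rightarrow> ('i \<Rightarrow> complex) set" where
  "l2 I = {f. (\<forall>a. a \<notin> I \<longrightarrow> f a = 0) \<and> (\<lambda>a. (cmod (f a))^2) summable_on I}"

definition l2_inner :: "('i \<Rightarrow> complex) \<Rightarrow> ('i \<Rightarrow> complex) \<Rightarrow> complex" where
  "l2_inner f g = (\<Sum>\<^sub>\<infinity>a. f a * cnj (g a))"

definition l2_norm :: "('i \<Rightarrow> complex) \<Rightarrow> real" where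
  "l2_norm f = sqrt (\<Sum>\<^sub>\<infinity>a. (cmod (f a))^2)"

definition l2_closure :: "'i set \<Rightarrow> ('i \<Rightarrow> complex) set \<Rightarrow> ('i \<Rightarrow> complex) set" where
  "l2_closure I S = {x \<in> l2 I. \<exists>u. (\<forall>n. u n \<in> S) \<and>
      (\<lambda>n. l2_norm (\<lambda>a. u n a - x a)) \<longlonglongrightarrow> 0}"

definition cspan :: "('i \<Rightarrow> complex) set \<Rightarrow> ('i \<Rightarrow> complex) set" where
  "cspan S = {x. \<exists>(n::nat) (c::nat \<Rightarrow> complex) v. (\<forall>i<n. v i \<in> S) \<and>
      x = (\<lambda>a. \<Sum>i<n. c i * v i a)}"

definition cl_span :: "'i set \<Rightarrow> ('i \<Rightarrow> complex) set \<Rightarrow> ('i \<Rightarrow> complex) set" where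
  "cl_span I S = l2_closure I (cspan S)"

definition closed_subspace :: "'i set \<Rightarrow> ('i \<Rightarrow> complex) set \<Rightarrow> bool" where
  "closed_subspace I F \<longleftrightarrow> F \<subseteq> l2 I \<and> (\<lambda>a. 0) \<in> F \<and>
     (\<forall>x\<in>F. \<forall>y\<in>F. (\<lambda>a. x a + y a) \<in> F) \<and>
     (\<forall>c. \<forall>x\<in>F. (\<lambda>a. c * x a) \<in> F) \<and> l2_closure I F \<subseteq> F"

definition orth :: "'i set \<Rightarrow> ('i \<Rightarrow> complex) set \<Rightarrow> ('i \<Rightarrow> complex) set" where
  "orth I F = {x \<in> l2 I. \<forall>y\<in>F. l2_inner x y = 0}"

definition tensor :: "('i \<Rightarrow> complex) \<Rightarrow> ('j \<Rightarrow> complex) \<Rightarrow> ('i \<times> 'j \<Rightarrow> complex)" where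
  "tensor x y = (\<lambda>(a, b). x a * y b)"

definition htensor :: "'i set \<Rightarrow> 'j set \<Rightarrow> ('i \<Rightarrow> complex) set \<Rightarrow> ('j \<Rightarrow> complex) set
    \<Rightarrow> ('i \<times> 'j \<Rightarrow> complex) set" where
  "htensor I J A B = cl_span (I \<times> J) {tensor x y | x y. x \<in> A \<and> y \<in> B}"

definition unitary_l2 :: "'i set \<Rightarrow> 'j set \<Rightarrow> (('i \<Rightarrow> complex) \<Rightarrow> ('j \<Rightarrow> complex)) \<Rightarrow> bool" where
  "unitary_l2 I J U \<longleftrightarrow> U ` l2 I = l2 J \<and>
     (\<forall>x\<in>l2 I. \<forall>y\<in>l2 I. U (\<lambda>a. x a + y a) = (\<lambda>b. U x b + U y b)) \<and>
     (\<forall>c. \<forall>x\<in>l2 I. U (\<lambda>a. c * x a) = (\<lambda>b. c * U x b)) \<and>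
     (\<forall>x\<in>l2 I. \<forall>y\<in>l2 I. l2_inner (U x) (U y) = l2_inner x y)"

text \<open>U (x) 1 and 1 (x) U acting on l2(I x K) resp. l2(K x I).\<close>
definition op_tensor_id :: "(('i \<Rightarrow> complex) \<Rightarrow> ('j \<Rightarrow> complex)) \<Rightarrow> ('i \<times> 'k \<Rightarrow> complex)
    \<Rightarrow> ('j \<times> 'k \<Rightarrow> complex)" where
  "op_tensor_id U f = (\<lambda>(p, c). U (\<lambda>a. f (a, c)) p)"

definition id_tensor_op :: "(('i \<Rightarrow> complex) \<Rightarrow> ('j \<Rightarrow> complex)) \<Rightarrow> ('k \<times> 'i \<Rightarrow> complex)
    \<Rightarrow> ('k \<times> 'j \<Rightarrow> complex)" where
  "id_tensor_op U f = (\<lambda>(a, q). U (\<lambda>b. f (a, b)) q)"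

text \<open>Product system: E t = index set of the Hilbert space l2(E t), V s t : E_(s+t) \<rightarrow> E_s (x) E_t unitary,
associative. (The measurable structure is not modelled.)\<close>
definition product_system :: "(real \<Rightarrow> 'i::countable set)
    \<Rightarrow> (real \<Rightarrow> real \<Rightarrow> ('i \<Rightarrow> complex) \<Rightarrow> ('i \<times> 'i \<Rightarrow> complex)) \<Rightarrow> bool" where
  "product_system E V \<longleftrightarrow>
     (\<forall>s>0. \<forall>t>0. unitary_l2 (E (s + t)) (E s \<times> E t) (V s t)) \<and>
     (\<forall>r>0. \<forall>s>0. \<forall>t>0. \<forall>x\<in>l2 (E (r + s + t)). \<forall>a b c.
        op_tensor_id (V r s) (V (r + s) t x) ((a, b), c) =
        id_tensor_op (V s t) (V r (s + t) x) (a, (b, c)))"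

definition inclusion_subsystem :: "(real \<Rightarrow> 'i::countable set)
    \<Rightarrow> (real \<Rightarrow> real \<Rightarrow> ('i \<Rightarrow> complex) \<Rightarrow> ('i \<times> 'i \<Rightarrow> complex))
    \<Rightarrow> (real \<Rightarrow> ('i \<Rightarrow> complex) set) \<Rightarrow> bool" where
  "inclusion_subsystem E V F \<longleftrightarrow>
     (\<forall>t>0. closed_subspace (E t) (F t)) \<and>
     (\<forall>s>0. \<forall>t>0. V s t ` F (s + t) \<subseteq> htensor (E s) (E t) (F s) (F t))"

end

theory Submission
  imports Defs
begin

text \<open>A generator \<open>z\<close> of \<open>G\<^sub>t\<close> satisfies \<open>V\<^sub>r\<^sub>,\<^sub>t\<^sub>-\<^sub>r z = x \<otimes> y\<close> with \<open>x \<perp> F\<^sup>1\<^sub>r\<close> and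
  \<open>y \<perp> F\<^sup>2\<^sub>t\<^sub>-\<^sub>r\<close>, while \<open>V\<^sub>r\<^sub>,\<^sub>t\<^sub>-\<^sub>r\<close> maps \<open>F\<^sup>i\<^sub>t\<close> into \<open>F\<^sup>i\<^sub>r \<otimes> F\<^sup>i\<^sub>t\<^sub>-\<^sub>r\<close>; hence
  \<open>z \<perp> F\<^sup>1\<^sub>t, F\<^sup>2\<^sub>t\<close>, which gives \<open>F\<^sup>i\<^sub>t \<subseteq> G'\<^sub>t\<close>.
  For \<open>z \<in> G'\<^sub>s\<^sub>+\<^sub>t\<close>, associativity of the product system shows that \<open>c \<otimes> y\<close> and \<open>x \<otimes> d\<close>,
  for generators \<open>c\<close> of \<open>G\<^sub>s\<close> and \<open>d\<close> of \<open>G\<^sub>t\<close>, are images under \<open>V\<^sub>s\<^sub>,\<^sub>t\<close> of generators of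
  \<open>G\<^sub>s\<^sub>+\<^sub>t\<close>. So \<open>V\<^sub>s\<^sub>,\<^sub>t z\<close> is orthogonal to \<open>G\<^sub>s \<otimes> \<E>\<^sub>t\<close> and to \<open>\<E>\<^sub>s \<otimes> G\<^sub>t\<close>, and the
  orthogonal complement of these two subspaces is \<open>G'\<^sub>s \<otimes> G'\<^sub>t\<close>: split the basis vectors of
  \<open>\<E>\<^sub>s\<close> and \<open>\<E>\<^sub>t\<close> along \<open>G\<^sub>s \<oplus> G'\<^sub>s\<close> and \<open>G\<^sub>t \<oplus> G'\<^sub>t\<close>.
  The orthogonal projections needed for this split exist because \<open>l2(I)\<close> is complete.\<close>

section \<open>Square-summable functions\<close>

definition square_summable :: "('a \<Rightarrow> complex) \<Rightarrow> bool" where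
  "square_summable f \<longleftrightarrow> (\<lambda>a. (cmod (f a))^2) summable_on UNIV"

lemma square_summable_zero [simp]: "square_summable (\<lambda>a. 0)"
  by (simp add: square_summable_def)

lemma square_summable_add:
  assumes "square_summable f" "square_summable g"
  shows "square_summable (\<lambda>a. f a + g a)"
proof -
  have "(\<lambda>a. 2 * (cmod (f a))^2 + 2 * (cmod (g a))^2) summable_on UNIV"
    using assms unfolding square_summable_def by (intro summable_on_add summable_on_cmult_right)
  moreover have "(cmod (f a + g a))^2 \<le> 2 * (cmod (f a))^2 + 2 * (cmod (g a))^2" for a
  proof -
    have "(cmod (f a + g a))^2 \<le> (cmod (f a) + cmod (g a))^2"
      by (intro power_mono norm_triangle_ineq) simp
    also have "\<dots> \<le> 2 * (cmod (f a))^2 + 2 * (cmod (g a))^2"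
      using zero_le_power2[of "cmod (f a) - cmod (g a)"] by (simp add: power2_eq_square algebra_simps)
    finally show ?thesis .
  qed
  ultimately show ?thesis
    unfolding square_summable_def by (rule summable_on_comparison_test) simp
qed

lemma square_summable_scale:
  assumes "square_summable f" shows "square_summable (\<lambda>a. c * f a)"
  using summable_on_cmult_right[OF assms[unfolded square_summable_def], of "(cmod c)^2"]
  unfolding square_summable_def by (simp add: norm_mult power_mult_distrib)

lemma square_summable_diff:
  assumes "square_summable f" "square_summable g" shows "square_summable (\<lambda>a. f a - g a)"
  using square_summable_add[OF assms(1) square_summable_scale[OF assms(2), of "-1"]] by simp

lemma square_summable_inner_abs_summable:
  assumes "square_summable f" "square_summable g"
  shows "(\<lambda>a. norm (f a * cnj (g a))) summable_on UNIV"
  by (rule abs_summable_product)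
    (use assms in \<open>simp_all add: square_summable_def norm_mult power2_eq_square\<close>)

lemma square_summable_inner_summable:
  assumes "square_summable f" "square_summable g" shows "(\<lambda>a. f a * cnj (g a)) summable_on UNIV"
  by (rule abs_summable_summable[OF square_summable_inner_abs_summable[OF assms]])

lemma l2_iff: "f \<in> l2 I \<longleftrightarrow> square_summable f \<and> (\<forall>a. a \<notin> I \<longrightarrow> f a = 0)"
proof -
  have "(\<lambda>a. (cmod (f a))^2) summable_on UNIV \<longleftrightarrow> (\<lambda>a. (cmod (f a))^2) summable_on I"
    if "\<forall>a. a \<notin> I \<longrightarrow> f a = 0"
    using that by (intro summable_on_cong_neutral) auto
  thus ?thesis by (auto simp: l2_def square_summable_def)
qed

lemma l2_square_summable: "f \<in> l2 I \<Longrightarrow> square_summable f"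
  by (simp add: l2_iff)

lemma l2_add: "f \<in> l2 I \<Longrightarrow> g \<in> l2 I \<Longrightarrow> (\<lambda>a. f a + g a) \<in> l2 I"
  by (simp add: l2_iff square_summable_add)

lemma l2_scale: "f \<in> l2 I \<Longrightarrow> (\<lambda>a. c * f a) \<in> l2 I"
  by (simp add: l2_iff square_summable_scale)

lemma l2_diff: "f \<in> l2 I \<Longrightarrow> g \<in> l2 I \<Longrightarrow> (\<lambda>a. f a - g a) \<in> l2 I"
  by (simp add: l2_iff square_summable_diff)

lemma l2_zero: "(\<lambda>a. 0) \<in> l2 I"
  by (simp add: l2_iff)

lemma l2_indicator:
  assumes "i \<in> I" shows "(\<lambda>a. if a = i then 1 else 0) \<in> l2 I"
proof -
  have "(\<lambda>a. (cmod (if a = i then (1::complex) else 0))^2) summable_on {i}"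
    by simp
  hence "(\<lambda>a. (cmod (if a = i then (1::complex) else 0))^2) summable_on UNIV"
    by (rule summable_on_cong_neutral[THEN iffD1, rotated -1]) auto
  thus ?thesis using assms by (auto simp: l2_iff square_summable_def)
qed

section \<open>The inner product of \<open>l2\<close>\<close>

lemma l2_inner_cnj: "l2_inner g f = cnj (l2_inner f g)"
  unfolding l2_inner_def by (simp flip: infsum_cnj add: mult.commute)

lemma l2_inner_eq_0_commute: "l2_inner x y = 0 \<longleftrightarrow> l2_inner y x = 0"
  by (metis l2_inner_cnj complex_cnj_zero_iff)

lemma l2_inner_add_left:
  "square_summable f \<Longrightarrow> square_summable g \<Longrightarrow> square_summable h \<Longrightarrow>
    l2_inner (\<lambda>a. f a + g a) h = l2_inner f h + l2_inner g h"
  unfolding l2_inner_def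
  by (simp add: distrib_right infsum_add square_summable_inner_summable)

lemma l2_inner_add_right:
  "square_summable f \<Longrightarrow> square_summable g \<Longrightarrow> square_summable h \<Longrightarrow>
    l2_inner h (\<lambda>a. f a + g a) = l2_inner h f + l2_inner h g"
  by (metis l2_inner_cnj l2_inner_add_left complex_cnj_add)

lemma l2_inner_scale_left: "l2_inner (\<lambda>a. c * f a) g = c * l2_inner f g"
proof (cases "c = 0")
  case False
  have "(\<lambda>a. inverse c * (c * (f a * cnj (g a)))) = (\<lambda>a. f a * cnj (g a))"
    using False by (simp add: fun_eq_iff)
  hence "(\<lambda>a. c * (f a * cnj (g a))) summable_on UNIV \<longleftrightarrow> (\<lambda>a. f a * cnj (g a)) summable_on UNIV"
    by (metis summable_on_cmult_right)
  thus ?thesis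
    unfolding l2_inner_def mult.assoc by (metis infsum_cmult_right infsum_not_exists mult_zero_right)
qed (simp add: l2_inner_def)

lemma l2_inner_scale_right: "l2_inner g (\<lambda>a. c * f a) = cnj c * l2_inner g f"
  by (metis l2_inner_cnj l2_inner_scale_left complex_cnj_mult)

lemma l2_inner_diff_left:
  "square_summable f \<Longrightarrow> square_summable g \<Longrightarrow> square_summable h \<Longrightarrow>
    l2_inner (\<lambda>a. f a - g a) h = l2_inner f h - l2_inner g h"
  using l2_inner_add_left[of f "\<lambda>a. (-1) * g a" h] l2_inner_scale_left[of "-1" g h]
    square_summable_scale[of g "-1"]
  by simp

lemma l2_inner_zero_left [simp]: "l2_inner (\<lambda>a. 0) z = 0"
  by (simp add: l2_inner_def)

lemma l2_inner_self:
  assumes "square_summable f" shows "l2_inner f f = of_real (\<Sum>\<^sub>\<infinity>a. (cmod (f a))^2)"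
proof -
  have "l2_inner f f = (\<Sum>\<^sub>\<infinity>a. of_real ((cmod (f a))^2))"
    unfolding l2_inner_def complex_norm_square by simp
  also have "\<dots> = of_real (\<Sum>\<^sub>\<infinity>a. (cmod (f a))^2)"
    using assms unfolding square_summable_def by (metis has_sum_of_real has_sum_infsum infsumI)
  finally show ?thesis .
qed

lemma l2_norm_nonneg: "0 \<le> l2_norm f"
  by (simp add: l2_norm_def infsum_nonneg)

lemma l2_norm_sqrt_inner: "square_summable f \<Longrightarrow> l2_norm f = sqrt (Re (l2_inner f f))"
  by (simp add: l2_norm_def l2_inner_self)

lemma l2_inner_self_eq_0:
  assumes "square_summable f" "l2_inner f f = 0" shows "f = (\<lambda>a. 0)"
proof -
  have sum: "(\<Sum>\<^sub>\<infinity>a. (cmod (f a))^2) = 0" using assms by (simp add: l2_inner_self)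
  have "(cmod (f a))^2 = 0" for a
    by (rule nonneg_infsum_le_0D[of _ UNIV]) (use sum assms in \<open>auto simp: square_summable_def\<close>)
  thus ?thesis by (simp add: fun_eq_iff)
qed

lemma l2_inner_indicator: "l2_inner q (\<lambda>a. if a = p then 1 else 0) = q p"
proof -
  have "l2_inner q (\<lambda>a. if a = p then 1 else 0) = (\<Sum>\<^sub>\<infinity>a\<in>{p}. q a * cnj (if a = p then 1 else 0))"
    unfolding l2_inner_def by (rule infsum_cong_neutral) auto
  thus ?thesis by simp
qed

section \<open>Projections in real Hilbert spaces\<close>

lemma Cauchy_if_dist_le_null_sum:
  fixes u :: "nat \<Rightarrow> 'a::metric_space"
  assumes dist: "\<And>m n. dist (u m) (u n) \<le> e m + e n" and e: "e \<longlonglongrightarrow> 0"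
  shows "Cauchy u"
proof (rule metric_CauchyI)
  fix \<epsilon> :: real assume "0 < \<epsilon>"
  then obtain N where N: "\<forall>n\<ge>N. norm (e n - 0) < \<epsilon> / 2" using LIMSEQ_D[OF e, of "\<epsilon> / 2"] by auto
  show "\<exists>N. \<forall>m\<ge>N. \<forall>n\<ge>N. dist (u m) (u n) < \<epsilon>"
  proof (intro exI allI impI)
    fix m n assume "N \<le> m" "N \<le> n"
    hence "\<bar>e m\<bar> < \<epsilon> / 2" "\<bar>e n\<bar> < \<epsilon> / 2" using N by simp_all
    thus "dist (u m) (u n) < \<epsilon>" using dist[of m n] by linarith
  qed
qed

lemma parallelogram_dist_bound:
  fixes M :: "'a::real_inner set"
  assumes "convex M" "a \<in> M" "b \<in> M" and D: "\<And>m. m \<in> M \<Longrightarrow> D \<le> (norm (x - m))^2"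
  shows "(norm (a - b))^2 \<le> 2 * (norm (x - a))^2 + 2 * (norm (x - b))^2 - 4 * D"
proof -
  have "(1/2) *\<^sub>R a + (1/2) *\<^sub>R b \<in> M"
    by (rule convexD[OF assms(1-3)]) auto
  hence mid: "(1/2) *\<^sub>R (a + b) \<in> M" by (simp add: scaleR_add_right)
  have "(x - a) + (x - b) = 2 *\<^sub>R (x - (1/2) *\<^sub>R (a + b))"
    by (simp add: algebra_simps scaleR_2)
  hence "(norm ((x - a) + (x - b)))^2 = 4 * (norm (x - (1/2) *\<^sub>R (a + b)))^2"
    by (simp add: power2_eq_square)
  hence "4 * D \<le> (norm ((x - a) + (x - b)))^2" using D[OF mid] by simp
  moreover have "(norm (a - b))^2 = 2 * (norm (x - a))^2 + 2 * (norm (x - b))^2 - (norm ((x - a) + (x - b)))^2"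
    by (simp add: power2_norm_eq_inner inner_add inner_diff inner_commute)
  ultimately show ?thesis by simp
qed

lemma nearest_point_exists:
  fixes M :: "'a::{real_inner,complete_space} set"
  assumes "closed M" "convex M" "M \<noteq> {}"
  shows "\<exists>p\<in>M. \<forall>m\<in>M. norm (x - p) \<le> norm (x - m)"
proof -
  define D where "D = (INF m\<in>M. (norm (x - m))^2)"
  have D_le: "D \<le> (norm (x - m))^2" if "m \<in> M" for m
    unfolding D_def by (rule cINF_lower[OF bdd_belowI2[of _ 0]]) (use that in auto)
  have "\<exists>m\<in>M. (norm (x - m))^2 < D + 1 / (real n + 1)" for n
    using \<open>M \<noteq> {}\<close> unfolding D_def
    by (subst cINF_less_iff[symmetric]) (auto intro: bdd_belowI2[of _ 0])
  then obtain u where u: "\<And>n. u n \<in> M" and u_less: "\<And>n. (norm (x - u n))^2 < D + 1 / (real n + 1)"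
    by metis
  have "(norm (u m - u n))^2 \<le> 2 / (real m + 1) + 2 / (real n + 1)" for m n
    using parallelogram_dist_bound[OF \<open>convex M\<close> u[of m] u[of n] D_le] u_less[of m] u_less[of n]
      times_divide_eq_right[of 2 1 "real m + 1"] times_divide_eq_right[of 2 1 "real n + 1"]
    by linarith
  hence "dist (u m) (u n) \<le> sqrt (2 / (real m + 1)) + sqrt (2 / (real n + 1))" for m n
  proof -
    have "dist (u m) (u n) = sqrt ((norm (u m - u n))^2)" by (simp add: dist_norm)
    also have "\<dots> \<le> sqrt (2 / (real m + 1) + 2 / (real n + 1))"
      by (rule real_sqrt_le_mono) fact
    also have "\<dots> \<le> sqrt (2 / (real m + 1)) + sqrt (2 / (real n + 1))"
      by (rule sqrt_add_le_add_sqrt) auto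
    finally show ?thesis .
  qed
  moreover have "(\<lambda>n. sqrt (2 / (real n + 1))) \<longlonglongrightarrow> 0"
    using tendsto_real_sqrt[OF tendsto_mult_right_zero[OF LIMSEQ_inverse_real_of_nat, of 2]]
    by (simp add: divide_inverse add.commute)
  ultimately obtain p where "u \<longlonglongrightarrow> p"
    using Cauchy_if_dist_le_null_sum convergent_def by (metis Cauchy_convergent_iff)
  have "p \<in> M" using closed_sequentially[OF \<open>closed M\<close>] u \<open>u \<longlonglongrightarrow> p\<close> by blast
  moreover have "(norm (x - p))^2 \<le> D"
  proof (rule tendsto_le[of sequentially "\<lambda>n. D + 1 / (real n + 1)" D "\<lambda>n. (norm (x - u n))^2"])
    show "(\<lambda>n. D + 1 / (real n + 1)) \<longlonglongrightarrow> D"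
      using tendsto_add[OF tendsto_const[of D] LIMSEQ_inverse_real_of_nat]
      by (simp add: inverse_eq_divide add.commute)
    show "(\<lambda>n. (norm (x - u n))^2) \<longlonglongrightarrow> (norm (x - p))^2" by (intro tendsto_intros \<open>u \<longlonglongrightarrow> p\<close>)
    show "\<forall>\<^sub>F n in sequentially. (norm (x - u n))^2 \<le> D + 1 / (real n + 1)"
      using u_less by (simp add: less_imp_le)
  qed simp
  ultimately show ?thesis using D_le by (metis norm_ge_zero power2_le_imp_le order_trans)
qed

lemma nearest_point_orthogonal:
  fixes M :: "'a::real_inner set"
  assumes "subspace M" "p \<in> M" and nearest: "\<forall>m\<in>M. norm (x - p) \<le> norm (x - m)" and "m \<in> M"
  shows "inner (x - p) m = 0"
proof (cases "m = 0")
  case False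
  define t where "t = inner (x - p) m / (norm m)^2"
  have "p + t *\<^sub>R m \<in> M" using assms by (simp add: subspace_add subspace_scale)
  hence "(norm (x - p))^2 \<le> (norm ((x - p) - t *\<^sub>R m))^2"
    using nearest by (simp add: diff_diff_eq power_mono)
  also have "\<dots> = (norm (x - p))^2 - 2 * t * inner (x - p) m + t^2 * (norm m)^2"
    unfolding power2_norm_eq_inner by (simp add: inner_commute power2_eq_square algebra_simps)
  also have "\<dots> = (norm (x - p))^2 - (inner (x - p) m)^2 / (norm m)^2"
    using False by (simp add: t_def power2_eq_square field_simps)
  finally show ?thesis using False by (simp add: divide_le_0_iff)
qed simp

section \<open>The Hilbert space \<open>'a ell2\<close>\<close>

text \<open>The real inner product of \<open>'a ell2\<close> is the real part of the complex one; complex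
  orthogonality is recovered from it by \<open>cinner_eq_Complex\<close>.\<close>
typedef 'a ell2 = "{f::'a \<Rightarrow> complex. square_summable f}" morphisms ell2_coeff ell2_of
  by (rule exI[of _ "\<lambda>_. 0"]) simp

setup_lifting type_definition_ell2

instantiation ell2 :: (type) real_vector
begin
lift_definition zero_ell2 :: "'a ell2" is "\<lambda>_. 0" by simp
lift_definition plus_ell2 :: "'a ell2 \<Rightarrow> 'a ell2 \<Rightarrow> 'a ell2" is "\<lambda>f g a. f a + g a"
  by (simp add: square_summable_add)
lift_definition minus_ell2 :: "'a ell2 \<Rightarrow> 'a ell2 \<Rightarrow> 'a ell2" is "\<lambda>f g a. f a - g a"
  by (simp add: square_summable_diff)
lift_definition uminus_ell2 :: "'a ell2 \<Rightarrow> 'a ell2" is "\<lambda>f a. - f a"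
  using square_summable_scale[of _ "-1"] by simp
lift_definition scaleR_ell2 :: "real \<Rightarrow> 'a ell2 \<Rightarrow> 'a ell2" is "\<lambda>r f a. complex_of_real r * f a"
  by (simp add: square_summable_scale)
instance
  by intro_classes (transfer; simp add: fun_eq_iff algebra_simps)+
end

lift_definition cscale :: "complex \<Rightarrow> 'a ell2 \<Rightarrow> 'a ell2" is "\<lambda>c f a. c * f a"
  by (simp add: square_summable_scale)

definition cinner :: "'a ell2 \<Rightarrow> 'a ell2 \<Rightarrow> complex" where
  "cinner x y = l2_inner (ell2_coeff x) (ell2_coeff y)"

lemma square_summable_ell2_coeff [simp]: "square_summable (ell2_coeff x)"
  using ell2_coeff by auto

lemma cinner_add_left: "cinner (x + y) z = cinner x z + cinner y z"
  unfolding cinner_def by transfer (simp add: l2_inner_add_left)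

lemma cinner_scaleR_left: "cinner (r *\<^sub>R x) y = of_real r * cinner x y"
  unfolding cinner_def by transfer (simp add: l2_inner_scale_left)

lemma cinner_cscale_right: "cinner y (cscale c x) = cnj c * cinner y x"
  unfolding cinner_def by transfer (simp add: l2_inner_scale_right)

lemma cinner_cnj: "cinner y x = cnj (cinner x y)"
  unfolding cinner_def by (rule l2_inner_cnj)

lemma cinner_self: "cinner x x = of_real (\<Sum>\<^sub>\<infinity>a. (cmod (ell2_coeff x a))^2)"
  unfolding cinner_def by (simp add: l2_inner_self)

instantiation ell2 :: (type) real_inner
begin
definition norm_ell2 :: "'a ell2 \<Rightarrow> real" where "norm_ell2 x = sqrt (Re (cinner x x))"
definition sgn_ell2 :: "'a ell2 \<Rightarrow> 'a ell2" where "sgn_ell2 x = inverse (norm x) *\<^sub>R x"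
definition dist_ell2 :: "'a ell2 \<Rightarrow> 'a ell2 \<Rightarrow> real" where "dist_ell2 x y = norm (x - y)"
definition uniformity_ell2 :: "('a ell2 \<times> 'a ell2) filter"
  where "uniformity_ell2 = (INF e\<in>{0 <..}. principal {(x, y). dist x y < e})"
definition open_ell2 :: "'a ell2 set \<Rightarrow> bool"
  where "open_ell2 S = (\<forall>x\<in>S. \<forall>\<^sub>F (x', y) in uniformity. x' = x \<longrightarrow> y \<in> S)"
definition inner_ell2 :: "'a ell2 \<Rightarrow> 'a ell2 \<Rightarrow> real" where "inner_ell2 x y = Re (cinner x y)"
instance
proof
  fix x y z :: "'a ell2" and r :: real
  show "inner x y = inner y x" unfolding inner_ell2_def by (subst cinner_cnj) simp
  show "inner (x + y) z = inner x z + inner y z" unfolding inner_ell2_def by (simp add: cinner_add_left)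
  show "inner (r *\<^sub>R x) y = r * inner x y" unfolding inner_ell2_def by (simp add: cinner_scaleR_left)
  show "0 \<le> inner x x" unfolding inner_ell2_def by (simp add: cinner_self infsum_nonneg[of UNIV "\<lambda>a. (cmod (ell2_coeff x a))^2"])
  show "inner x x = 0 \<longleftrightarrow> x = 0"
  proof
    assume "inner x x = 0"
    hence "cinner x x = 0" by (simp add: inner_ell2_def cinner_self)
    hence "ell2_coeff x = (\<lambda>a. 0)" by (intro l2_inner_self_eq_0) (simp_all add: cinner_def)
    hence "ell2_coeff x = ell2_coeff 0" by (simp add: zero_ell2.rep_eq)
    thus "x = 0" by (simp add: ell2_coeff_inject)
  qed (simp add: inner_ell2_def cinner_def zero_ell2.rep_eq)
  show "norm x = sqrt (inner x x)" unfolding inner_ell2_def norm_ell2_def ..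
qed (simp_all add: sgn_ell2_def dist_ell2_def uniformity_ell2_def open_ell2_def)
end

lemma norm_ell2_infsum: "norm x = sqrt (\<Sum>\<^sub>\<infinity>a. (cmod (ell2_coeff x a))^2)"
  by (simp add: norm_ell2_def cinner_self)

lemma ell2_coeff_diff: "ell2_coeff (x - y) a = ell2_coeff x a - ell2_coeff y a"
  by (simp add: minus_ell2.rep_eq)

lemma ell2_coeff_of: "square_summable f \<Longrightarrow> ell2_coeff (ell2_of f) = f"
  by (simp add: ell2_of_inverse)

lemma finite_sum_coeff_le_norm:
  assumes "finite F" shows "(\<Sum>a\<in>F. (cmod (ell2_coeff x a))^2) \<le> (norm x)^2"
proof -
  have "(\<Sum>a\<in>F. (cmod (ell2_coeff x a))^2) \<le> (\<Sum>\<^sub>\<infinity>a. (cmod (ell2_coeff x a))^2)"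
    using finite_sum_le_infsum[of "\<lambda>a. (cmod (ell2_coeff x a))^2" UNIV F]
      square_summable_ell2_coeff[of x, unfolded square_summable_def] assms
    by simp
  thus ?thesis unfolding norm_ell2_infsum by (simp add: infsum_nonneg)
qed

lemma norm_coeff_le_norm: "cmod (ell2_coeff x a) \<le> norm x"
proof (rule power2_le_imp_le)
  show "(cmod (ell2_coeff x a))^2 \<le> (norm x)^2" using finite_sum_coeff_le_norm[of "{a}" x] by simp
qed simp

lemma bounded_linear_ell2_coeff: "bounded_linear (\<lambda>x. ell2_coeff x a)"
proof (rule bounded_linear_intro[where K = 1])
  show "ell2_coeff (x + y) a = ell2_coeff x a + ell2_coeff y a" for x y
    by (simp add: plus_ell2.rep_eq)
  show "ell2_coeff (r *\<^sub>R x) a = r *\<^sub>R ell2_coeff x a" for r x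
    by (simp add: scaleR_ell2.rep_eq scaleR_conv_of_real)
qed (simp add: norm_coeff_le_norm)

lemma closed_ell2_support: "closed {v. \<forall>a. a \<notin> I \<longrightarrow> ell2_coeff v a = 0}"
proof -
  have "{v. \<forall>a. a \<notin> I \<longrightarrow> ell2_coeff v a = 0} = (\<Inter>a\<in>-I. {v. ell2_coeff v a = 0})" by auto
  thus ?thesis
    by (simp add: closed_INT closed_Collect_eq linear_continuous_on[OF bounded_linear_ell2_coeff])
qed

lemma ell2_Cauchy_tail_bound:
  fixes X :: "nat \<Rightarrow> 'a ell2"
  assumes Cauchy: "\<And>m n. m \<ge> N \<Longrightarrow> n \<ge> N \<Longrightarrow> norm (X m - X n) \<le> e"
    and lim: "\<And>a. (\<lambda>m. ell2_coeff (X m) a) \<longlonglongrightarrow> L a" and "n \<ge> N"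
  shows "square_summable (\<lambda>a. ell2_coeff (X n) a - L a)"
    and "(\<Sum>\<^sub>\<infinity>a. (cmod (ell2_coeff (X n) a - L a))^2) \<le> e^2"
proof -
  have finite_sums: "(\<Sum>a\<in>F. (cmod (ell2_coeff (X n) a - L a))^2) \<le> e^2" if "finite F" for F
  proof (rule tendsto_le[OF _ tendsto_const])
    show "(\<lambda>m. \<Sum>a\<in>F. (cmod (ell2_coeff (X n - X m) a))^2) \<longlonglongrightarrow> (\<Sum>a\<in>F. (cmod (ell2_coeff (X n) a - L a))^2)"
      unfolding ell2_coeff_diff by (intro tendsto_intros lim)
    show "\<forall>\<^sub>F m in sequentially. (\<Sum>a\<in>F. (cmod (ell2_coeff (X n - X m) a))^2) \<le> e^2"
    proof (rule eventually_sequentiallyI[of N])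
      fix m assume "N \<le> m"
      have "0 \<le> e" using Cauchy[of n n] \<open>n \<ge> N\<close> by simp
      hence "(norm (X n - X m))^2 \<le> e^2" using Cauchy[of n m] \<open>N \<le> m\<close> \<open>n \<ge> N\<close> by (simp add: power_mono)
      thus "(\<Sum>a\<in>F. (cmod (ell2_coeff (X n - X m) a))^2) \<le> e^2"
        using finite_sum_coeff_le_norm[OF that] order_trans by blast
    qed
  qed simp
  have summable: "(\<lambda>a. (cmod (ell2_coeff (X n) a - L a))^2) summable_on UNIV"
    by (intro nonneg_bdd_above_summable_on bdd_aboveI2[where M = "e^2"]) (auto intro: finite_sums)
  thus "square_summable (\<lambda>a. ell2_coeff (X n) a - L a)" by (simp add: square_summable_def)
  show "(\<Sum>\<^sub>\<infinity>a. (cmod (ell2_coeff (X n) a - L a))^2) \<le> e^2"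
    by (rule infsum_le_finite_sums[OF summable]) (rule finite_sums)
qed

instance ell2 :: (type) complete_space
proof
  fix X :: "nat \<Rightarrow> 'a ell2" assume X: "Cauchy X"
  have bound: "\<exists>N. \<forall>m\<ge>N. \<forall>n\<ge>N. norm (X m - X n) \<le> e" if "0 < e" for e
    using metric_CauchyD[OF X that] by (auto simp: dist_norm intro: less_imp_le)
  have pointwise_Cauchy: "Cauchy (\<lambda>n. ell2_coeff (X n) a)" for a
    using bounded_linear.Cauchy[OF bounded_linear_ell2_coeff X] .
  define L where "L a = lim (\<lambda>n. ell2_coeff (X n) a)" for a
  have L: "(\<lambda>n. ell2_coeff (X n) a) \<longlonglongrightarrow> L a" for a
    using pointwise_Cauchy[of a] by (simp add: L_def Cauchy_convergent_iff convergent_LIMSEQ_iff)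
  obtain N1 where N1: "\<forall>m\<ge>N1. \<forall>n\<ge>N1. norm (X m - X n) \<le> 1" using bound[of 1] by auto
  have "square_summable (\<lambda>a. ell2_coeff (X N1) a - L a)"
    by (rule ell2_Cauchy_tail_bound(1)[of N1 X 1 L N1]) (use N1 L in auto)
  hence L_summable: "square_summable L"
    using square_summable_diff[OF square_summable_ell2_coeff[of "X N1"]] by fastforce
  have "X \<longlonglongrightarrow> ell2_of L"
  proof (rule LIMSEQ_I)
    fix r :: real assume "0 < r"
    then obtain N where N: "\<forall>m\<ge>N. \<forall>n\<ge>N. norm (X m - X n) \<le> r/2" using bound[of "r/2"] by auto
    show "\<exists>N. \<forall>n\<ge>N. norm (X n - ell2_of L) < r"
    proof (intro exI allI impI)
      fix n assume "N \<le> n"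
      have "norm (X n - ell2_of L) = sqrt (\<Sum>\<^sub>\<infinity>a. (cmod (ell2_coeff (X n) a - L a))^2)"
        by (simp add: norm_ell2_infsum ell2_coeff_diff ell2_coeff_of[OF L_summable])
      also have "\<dots> \<le> sqrt ((r/2)^2)"
        by (intro real_sqrt_le_mono ell2_Cauchy_tail_bound(2)[of N X "r/2" L n])
          (use N L \<open>N \<le> n\<close> in auto)
      also have "\<dots> < r" using \<open>0 < r\<close> by simp
      finally show "norm (X n - ell2_of L) < r" .
    qed
  qed
  thus "convergent X" by (auto simp: convergent_def)
qed

section \<open>Transfer between \<open>l2\<close> and \<open>'a ell2\<close>\<close>

lemma ell2_of_add:
  "square_summable f \<Longrightarrow> square_summable g \<Longrightarrow> ell2_of (\<lambda>a. f a + g a) = ell2_of f + ell2_of g"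
  by (simp add: ell2_coeff_inject[symmetric] fun_eq_iff plus_ell2.rep_eq ell2_coeff_of square_summable_add)

lemma ell2_of_diff:
  "square_summable f \<Longrightarrow> square_summable g \<Longrightarrow> ell2_of (\<lambda>a. f a - g a) = ell2_of f - ell2_of g"
  by (simp add: ell2_coeff_inject[symmetric] fun_eq_iff ell2_coeff_diff ell2_coeff_of square_summable_diff)

lemma ell2_of_scale: "square_summable f \<Longrightarrow> ell2_of (\<lambda>a. c * f a) = cscale c (ell2_of f)"
  by (simp add: ell2_coeff_inject[symmetric] fun_eq_iff cscale.rep_eq ell2_coeff_of square_summable_scale)

lemma ell2_of_image_iff:
  assumes "x \<in> l2 I" "Y \<subseteq> l2 I" shows "ell2_of x \<in> ell2_of ` Y \<longleftrightarrow> x \<in> Y"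
  using assms ell2_of_inject by (fastforce simp: l2_iff)

lemma l2_norm_ell2_of: "square_summable f \<Longrightarrow> l2_norm f = norm (ell2_of f)"
  by (simp add: norm_ell2_infsum ell2_coeff_of l2_norm_def)

lemma l2_inner_ell2_of:
  "square_summable f \<Longrightarrow> square_summable g \<Longrightarrow> l2_inner f g = cinner (ell2_of f) (ell2_of g)"
  by (simp add: cinner_def ell2_coeff_of)

lemma norm_cscale: "norm (cscale c x) = cmod c * norm x"
proof -
  have "(\<Sum>\<^sub>\<infinity>a. (cmod (c * ell2_coeff x a))^2) = (cmod c)^2 * (\<Sum>\<^sub>\<infinity>a. (cmod (ell2_coeff x a))^2)"
    using square_summable_ell2_coeff[of x]
    by (simp add: norm_mult power_mult_distrib infsum_cmult_right square_summable_def)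
  thus ?thesis by (simp add: norm_ell2_infsum cscale.rep_eq real_sqrt_mult)
qed

lemma bounded_linear_cscale: "bounded_linear (cscale c)"
proof (rule bounded_linear_intro[where K = "cmod c"])
  show "cscale c (x + y) = cscale c x + cscale c y" for x y
    by transfer (simp add: algebra_simps)
  show "cscale c (r *\<^sub>R x) = r *\<^sub>R cscale c x" for r x
    by transfer (simp add: algebra_simps)
qed (simp add: norm_cscale)

lemma cinner_eq_Complex: "cinner x z = Complex (inner x z) (inner x (cscale \<i> z))"
  by (simp add: inner_ell2_def cinner_cscale_right complex_eq_iff)

definition l2_tendsto :: "(nat \<Rightarrow> 'a \<Rightarrow> complex) \<Rightarrow> ('a \<Rightarrow> complex) \<Rightarrow> bool" where
  "l2_tendsto u x \<longleftrightarrow> (\<lambda>n. l2_norm (\<lambda>a. u n a - x a)) \<longlonglongrightarrow> 0"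

lemma l2_closure_iff: "x \<in> l2_closure I X \<longleftrightarrow> x \<in> l2 I \<and> (\<exists>u. (\<forall>n. u n \<in> X) \<and> l2_tendsto u x)"
  by (simp add: l2_closure_def l2_tendsto_def)

lemma l2_tendsto_iff_tendsto:
  assumes "\<And>n. square_summable (u n)" "square_summable x"
  shows "l2_tendsto u x \<longleftrightarrow> (\<lambda>n. ell2_of (u n)) \<longlonglongrightarrow> ell2_of x"
  using assms
  by (simp add: l2_tendsto_def l2_norm_ell2_of square_summable_diff ell2_of_diff tendsto_norm_zero_iff
      LIM_zero_iff)

lemma l2_inner_tendsto:
  assumes "\<And>n. square_summable (u n)" "square_summable x" "square_summable z" "l2_tendsto u x"
  shows "(\<lambda>n. l2_inner (u n) z) \<longlonglongrightarrow> l2_inner x z"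
proof -
  have "(\<lambda>n. ell2_of (u n)) \<longlonglongrightarrow> ell2_of x" using assms l2_tendsto_iff_tendsto by blast
  hence "(\<lambda>n. cinner (ell2_of (u n)) (ell2_of z)) \<longlonglongrightarrow> cinner (ell2_of x) (ell2_of z)"
    unfolding cinner_eq_Complex by (intro tendsto_intros)
  thus ?thesis using assms by (simp add: l2_inner_ell2_of)
qed

lemma ell2_of_l2_closure:
  assumes "X \<subseteq> l2 I" shows "ell2_of ` l2_closure I X = closure (ell2_of ` X)"
proof
  show "ell2_of ` l2_closure I X \<subseteq> closure (ell2_of ` X)"
  proof
    fix v assume "v \<in> ell2_of ` l2_closure I X"
    then obtain x u where v: "v = ell2_of x" and x: "x \<in> l2 I" and u: "\<forall>n. u n \<in> X"
      and lim: "l2_tendsto u x"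
      by (auto simp: l2_closure_iff)
    have "\<And>n. square_summable (u n)" using u assms by (blast intro: l2_square_summable)
    hence "(\<lambda>n. ell2_of (u n)) \<longlonglongrightarrow> ell2_of x"
      using x lim l2_tendsto_iff_tendsto[of u x] by (simp add: l2_iff)
    thus "v \<in> closure (ell2_of ` X)"
      using u v by (auto simp: closure_sequential intro!: exI[of _ "\<lambda>n. ell2_of (u n)"])
  qed
  show "closure (ell2_of ` X) \<subseteq> ell2_of ` l2_closure I X"
  proof
    fix v assume "v \<in> closure (ell2_of ` X)"
    then obtain w where w: "\<And>n. w n \<in> ell2_of ` X" and lim: "w \<longlonglongrightarrow> v"
      by (auto simp: closure_sequential)
    have "\<forall>n. \<exists>x. x \<in> X \<and> w n = ell2_of x" using w by blast
    then obtain u where "\<forall>n. u n \<in> X \<and> w n = ell2_of (u n)" by metis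
    hence u: "\<And>n. u n \<in> X" and wu: "\<And>n. w n = ell2_of (u n)" by auto
    have u_l2: "u n \<in> l2 I" for n using u assms by blast
    have "closure (ell2_of ` X) \<subseteq> {v. \<forall>a. a \<notin> I \<longrightarrow> ell2_coeff v a = 0}"
      by (rule closure_minimal[OF _ closed_ell2_support]) (use assms in \<open>auto simp: ell2_coeff_of l2_iff\<close>)
    hence v_l2: "ell2_coeff v \<in> l2 I" using \<open>v \<in> closure (ell2_of ` X)\<close> by (auto simp: l2_iff)
    have "w = (\<lambda>n. ell2_of (u n))" using wu by (simp add: fun_eq_iff)
    hence "l2_tendsto u (ell2_coeff v)"
      using lim u_l2 by (simp add: l2_tendsto_iff_tendsto l2_iff ell2_coeff_inverse)
    hence "ell2_coeff v \<in> l2_closure I X" using v_l2 u by (auto simp: l2_closure_iff)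
    thus "v \<in> ell2_of ` l2_closure I X" by (metis ell2_coeff_inverse image_eqI)
  qed
qed

section \<open>Closed subspaces and closed spans\<close>

lemma cspan_subset:
  assumes "S \<subseteq> M" "(\<lambda>a. 0) \<in> M" "\<And>f g. f \<in> M \<Longrightarrow> g \<in> M \<Longrightarrow> (\<lambda>a. f a + g a) \<in> M"
    "\<And>c f. f \<in> M \<Longrightarrow> (\<lambda>a. c * f a) \<in> M"
  shows "cspan S \<subseteq> M"
proof
  fix x assume "x \<in> cspan S"
  then obtain n :: nat and c v where v: "\<forall>i<n. v i \<in> S" and x: "x = (\<lambda>a. \<Sum>i<n. c i * v i a)"
    unfolding cspan_def by auto
  have "(\<lambda>a. \<Sum>i<k. c i * v i a) \<in> M" if "k \<le> n" for k
    using that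
  proof (induction k)
    case (Suc k)
    have "v k \<in> M" using assms(1) v Suc.prems by auto
    hence "(\<lambda>a. c k * v k a) \<in> M" by (rule assms(4))
    thus ?case using assms(3)[OF Suc.IH] Suc.prems by simp
  qed (simp add: assms(2))
  thus "x \<in> M" using x by simp
qed

lemma cspan_superset: "S \<subseteq> cspan S"
proof
  fix s assume "s \<in> S"
  thus "s \<in> cspan S"
    unfolding cspan_def mem_Collect_eq
    by (intro exI[of _ 1] exI[of _ "\<lambda>_. 1"] exI[of _ "\<lambda>_. s"]) simp
qed

lemma cspan_zero: "(\<lambda>a. 0) \<in> cspan S"
  unfolding cspan_def by (rule CollectI, rule exI[of _ 0]) simp

lemma cspan_add: "x \<in> cspan S \<Longrightarrow> y \<in> cspan S \<Longrightarrow> (\<lambda>a. x a + y a) \<in> cspan S"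
proof -
  assume "x \<in> cspan S" "y \<in> cspan S"
  then obtain n m :: nat and c v d w where v: "\<forall>i<n. v i \<in> S" and x: "x = (\<lambda>a. \<Sum>i<n. c i * v i a)"
    and w: "\<forall>i<m. w i \<in> S" and y: "y = (\<lambda>a. \<Sum>i<m. d i * w i a)"
    unfolding cspan_def by auto
  define c' where "c' i = (if i < n then c i else d (i - n))" for i
  define v' where "v' i = (if i < n then v i else w (i - n))" for i
  have split: "(\<Sum>i<n + k. g i) = (\<Sum>i<n. g i) + (\<Sum>i<k. g (n + i))" for g :: "nat \<Rightarrow> complex" and k
    by (induction k) (simp_all add: add.assoc)
  have "(\<lambda>a. x a + y a) = (\<lambda>a. \<Sum>i<n + m. c' i * v' i a)"
    by (simp add: x y split c'_def v'_def fun_eq_iff)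
  moreover have "\<forall>i<n + m. v' i \<in> S" using v w by (auto simp: v'_def)
  ultimately show ?thesis unfolding cspan_def mem_Collect_eq
    by (intro exI[of _ "n + m"] exI[of _ c'] exI[of _ v']) simp
qed

lemma cspan_scale: "x \<in> cspan S \<Longrightarrow> (\<lambda>a. k * x a) \<in> cspan S"
proof -
  assume "x \<in> cspan S"
  then obtain n :: nat and c v where v: "\<forall>i<n. v i \<in> S" and x: "x = (\<lambda>a. \<Sum>i<n. c i * v i a)"
    unfolding cspan_def by auto
  have "(\<lambda>a. k * x a) = (\<lambda>a. \<Sum>i<n. (k * c i) * v i a)"
    by (simp add: x sum_distrib_left mult.assoc)
  thus ?thesis using v unfolding cspan_def mem_Collect_eq
    by (intro exI[of _ n] exI[of _ "\<lambda>i. k * c i"] exI[of _ v]) simp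
qed

lemma cspan_l2: "S \<subseteq> l2 I \<Longrightarrow> cspan S \<subseteq> l2 I"
  by (rule cspan_subset[OF _ l2_zero l2_add l2_scale])

lemma l2_closure_mono: "X \<subseteq> Y \<Longrightarrow> l2_closure I X \<subseteq> l2_closure I Y"
  unfolding l2_closure_def by blast

lemma l2_closure_superset: "X \<subseteq> l2 I \<Longrightarrow> X \<subseteq> l2_closure I X"
proof
  fix x assume "X \<subseteq> l2 I" "x \<in> X"
  moreover have "l2_tendsto (\<lambda>_. x) x" by (simp add: l2_tendsto_def l2_norm_def)
  ultimately show "x \<in> l2_closure I X" unfolding l2_closure_iff by (intro conjI exI[of _ "\<lambda>_. x"]) auto
qed

lemma cl_span_superset: "S \<subseteq> l2 I \<Longrightarrow> S \<subseteq> cl_span I S"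
  unfolding cl_span_def using cspan_superset[of S] l2_closure_superset[OF cspan_l2] by blast

lemma cl_span_l2: "cl_span I S \<subseteq> l2 I"
  unfolding cl_span_def l2_closure_def by auto

lemma cl_span_minimal:
  assumes "closed_subspace I M" "S \<subseteq> M" shows "cl_span I S \<subseteq> M"
proof -
  have "cspan S \<subseteq> M" using assms by (intro cspan_subset) (auto simp: closed_subspace_def)
  hence "cl_span I S \<subseteq> l2_closure I M" unfolding cl_span_def by (rule l2_closure_mono)
  thus ?thesis using assms(1) by (auto simp: closed_subspace_def)
qed

lemma closure_add_closed:
  fixes A :: "'a::real_normed_vector set"
  assumes "\<And>a b. a \<in> A \<Longrightarrow> b \<in> A \<Longrightarrow> a + b \<in> A" "a \<in> closure A" "b \<in> closure A"
  shows "a + b \<in> closure A"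
proof -
  have "a + b \<in> closure (A + A)" using closure_sum[of A A] assms(2,3) by blast
  moreover have "A + A \<subseteq> A" using assms(1) by (auto simp: set_plus_def)
  ultimately show ?thesis using closure_mono by blast
qed

lemma closure_cscale_closed:
  assumes "\<And>a. a \<in> A \<Longrightarrow> cscale c a \<in> A" "a \<in> closure A"
  shows "cscale c a \<in> closure A"
  using image_closure_subset[of A "cscale c" "closure A",
      OF linear_continuous_on[OF bounded_linear_cscale] closed_closure]
    assms closure_subset
  by blast

lemma ell2_of_cspan_add:
  assumes "S \<subseteq> l2 I" "a \<in> ell2_of ` cspan S" "b \<in> ell2_of ` cspan S"
  shows "a + b \<in> ell2_of ` cspan S"
proof -
  obtain f g where fg: "f \<in> cspan S" "g \<in> cspan S" and "a = ell2_of f" "b = ell2_of g"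
    using assms(2,3) by blast
  moreover have "square_summable f" "square_summable g"
    using fg cspan_l2[OF assms(1)] l2_square_summable by blast+
  ultimately have "a + b = ell2_of (\<lambda>x. f x + g x)" by (simp add: ell2_of_add)
  thus ?thesis using fg cspan_add by blast
qed

lemma ell2_of_cspan_cscale:
  assumes "S \<subseteq> l2 I" "a \<in> ell2_of ` cspan S" shows "cscale c a \<in> ell2_of ` cspan S"
proof -
  obtain f where f: "f \<in> cspan S" and "a = ell2_of f" using assms(2) by blast
  moreover have "square_summable f" using f cspan_l2[OF assms(1)] l2_square_summable by blast
  ultimately have "cscale c a = ell2_of (\<lambda>x. c * f x)" by (simp add: ell2_of_scale)
  thus ?thesis using f cspan_scale by blast
qed

lemma closed_subspace_cl_span:
  assumes S: "S \<subseteq> l2 I" shows "closed_subspace I (cl_span I S)"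
proof -
  let ?A = "ell2_of ` cspan S"
  have closure_eq: "ell2_of ` cl_span I S = closure ?A"
    unfolding cl_span_def by (rule ell2_of_l2_closure[OF cspan_l2[OF S]])
  have mem: "x \<in> cl_span I S \<longleftrightarrow> x \<in> l2 I \<and> ell2_of x \<in> closure ?A" for x
    using ell2_of_image_iff[OF _ cl_span_l2, of x I S] cl_span_l2[of I S] closure_eq by blast
  have summable: "square_summable x" if "x \<in> cl_span I S" for x
    using that cl_span_l2 l2_square_summable by blast
  show ?thesis
    unfolding closed_subspace_def
  proof (intro conjI ballI allI cl_span_l2)
    have "ell2_of (\<lambda>a. 0) \<in> closure ?A" by (rule subsetD[OF closure_subset imageI[OF cspan_zero]])
    thus "(\<lambda>a. 0) \<in> cl_span I S" by (simp add: mem l2_zero)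
  next
    fix x y assume xy: "x \<in> cl_span I S" "y \<in> cl_span I S"
    have "ell2_of (\<lambda>a. x a + y a) = ell2_of x + ell2_of y"
      using xy by (simp add: ell2_of_add summable)
    also have "\<dots> \<in> closure ?A"
      using xy by (intro closure_add_closed ell2_of_cspan_add[OF S]) (simp_all add: mem)
    finally show "(\<lambda>a. x a + y a) \<in> cl_span I S" using xy by (simp add: mem l2_add)
  next
    fix c x assume x: "x \<in> cl_span I S"
    have "ell2_of (\<lambda>a. c * x a) = cscale c (ell2_of x)"
      using x by (simp add: ell2_of_scale summable)
    also have "\<dots> \<in> closure ?A"
      using x by (intro closure_cscale_closed ell2_of_cspan_cscale[OF S]) (simp_all add: mem)
    finally show "(\<lambda>a. c * x a) \<in> cl_span I S" using x by (simp add: mem l2_scale)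
  next
    have "ell2_of ` l2_closure I (cl_span I S) \<subseteq> closure ?A"
      unfolding ell2_of_l2_closure[OF cl_span_l2] closure_eq by simp
    thus "l2_closure I (cl_span I S) \<subseteq> cl_span I S"
      using mem by (auto simp: l2_closure_def)
  qed
qed

lemma orth_antimono: "X \<subseteq> Y \<Longrightarrow> orth I Y \<subseteq> orth I X"
  by (auto simp: orth_def)

lemma orth_l2: "orth I X \<subseteq> l2 I"
  by (auto simp: orth_def)

lemma closed_subspace_orth:
  assumes X: "X \<subseteq> l2 I" shows "closed_subspace I (orth I X)"
proof -
  have "x \<in> orth I X" if x_closure: "x \<in> l2_closure I (orth I X)" for x
  proof -
    obtain u where x: "x \<in> l2 I" and u: "\<And>n. u n \<in> orth I X" and lim: "l2_tendsto u x"
      using x_closure by (auto simp: l2_closure_iff)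
    have "l2_inner x y = 0" if y: "y \<in> X" for y
    proof (rule LIMSEQ_unique)
      show "(\<lambda>n. l2_inner (u n) y) \<longlonglongrightarrow> l2_inner x y"
        using u x y X lim by (intro l2_inner_tendsto) (auto simp: orth_def intro: l2_square_summable)
      show "(\<lambda>n. l2_inner (u n) y) \<longlonglongrightarrow> 0" using u y by (simp add: orth_def)
    qed
    thus ?thesis using x by (simp add: orth_def)
  qed
  moreover have "(\<lambda>a. x a + y a) \<in> orth I X" if "x \<in> orth I X" "y \<in> orth I X" for x y
  proof -
    have "l2_inner (\<lambda>a. x a + y a) z = 0" if "z \<in> X" for z
      using that X \<open>x \<in> orth I X\<close> \<open>y \<in> orth I X\<close>
      by (subst l2_inner_add_left) (auto simp: orth_def intro: l2_square_summable)
    thus ?thesis using that by (simp add: orth_def l2_add)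
  qed
  moreover have "(\<lambda>a. c * x a) \<in> orth I X" if "x \<in> orth I X" for c x
    using that by (simp add: orth_def l2_scale l2_inner_scale_left)
  moreover have "(\<lambda>a. 0) \<in> orth I X" by (simp add: orth_def l2_zero)
  ultimately show ?thesis
    unfolding closed_subspace_def using orth_l2 by blast
qed

lemma orth_cl_span:
  assumes S: "S \<subseteq> l2 I" shows "orth I (cl_span I S) = orth I S"
proof
  show "orth I (cl_span I S) \<subseteq> orth I S" using cl_span_superset[OF S] by (rule orth_antimono)
  show "orth I S \<subseteq> orth I (cl_span I S)"
  proof
    fix x assume x: "x \<in> orth I S"
    hence "S \<subseteq> orth I {x}" using S by (auto simp: orth_def l2_inner_eq_0_commute[of x])
    hence "cl_span I S \<subseteq> orth I {x}"
      using x by (intro cl_span_minimal closed_subspace_orth) (auto simp: orth_def)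
    thus "x \<in> orth I (cl_span I S)" using x by (auto simp: orth_def l2_inner_eq_0_commute[of x])
  qed
qed

lemma cscale_ell2_of_closed_subspace:
  assumes C: "closed_subspace I C" and "v \<in> ell2_of ` C" shows "cscale c v \<in> ell2_of ` C"
proof -
  obtain f where f: "f \<in> C" and "v = ell2_of f" using assms(2) by blast
  moreover have "square_summable f" using C f l2_square_summable by (auto simp: closed_subspace_def)
  ultimately have "cscale c v = ell2_of (\<lambda>a. c * f a)" by (simp add: ell2_of_scale)
  thus ?thesis using C f by (auto simp: closed_subspace_def)
qed

lemma subspace_ell2_of_closed_subspace:
  assumes C: "closed_subspace I C" shows "subspace (ell2_of ` C)"
proof (rule subspaceI)
  show "0 \<in> ell2_of ` C" using C by (auto simp: closed_subspace_def zero_ell2.abs_eq)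
  show "v + w \<in> ell2_of ` C" if vw: "v \<in> ell2_of ` C" "w \<in> ell2_of ` C" for v w
  proof -
    obtain f g where fg: "f \<in> C" "g \<in> C" and "v = ell2_of f" "w = ell2_of g" using vw by blast
    moreover have "square_summable f" "square_summable g"
      using C fg l2_square_summable by (auto simp: closed_subspace_def)
    ultimately have "v + w = ell2_of (\<lambda>a. f a + g a)" by (simp add: ell2_of_add)
    thus ?thesis using C fg by (auto simp: closed_subspace_def)
  qed
  show "r *\<^sub>R v \<in> ell2_of ` C" if "v \<in> ell2_of ` C" for r v
  proof -
    have "r *\<^sub>R v = cscale (of_real r) v" by transfer simp
    thus ?thesis using cscale_ell2_of_closed_subspace[OF C that] by simp
  qed
qed

lemma closed_ell2_of_closed_subspace:
  assumes C: "closed_subspace I C" shows "closed (ell2_of ` C)"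
proof -
  have "C \<subseteq> l2 I" "l2_closure I C \<subseteq> C" using C by (simp_all add: closed_subspace_def)
  hence "closure (ell2_of ` C) \<subseteq> ell2_of ` C" by (metis ell2_of_l2_closure image_mono)
  thus ?thesis by (simp add: closure_subset_eq)
qed

lemma closed_subspace_projection:
  assumes C: "closed_subspace I C" and x: "x \<in> l2 I"
  shows "\<exists>p\<in>C. (\<lambda>a. x a - p a) \<in> orth I C"
proof -
  let ?M = "ell2_of ` C"
  have C_l2: "C \<subseteq> l2 I" and C_summable: "\<And>y. y \<in> C \<Longrightarrow> square_summable y"
    using C l2_square_summable by (auto simp: closed_subspace_def)
  obtain p where p: "p \<in> C"
    and nearest: "\<forall>m\<in>?M. norm (ell2_of x - ell2_of p) \<le> norm (ell2_of x - m)"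
    using nearest_point_exists[OF closed_ell2_of_closed_subspace[OF C]
        subspace_imp_convex[OF subspace_ell2_of_closed_subspace[OF C]], of "ell2_of x"] C
    by (fastforce simp: closed_subspace_def)
  have "cinner (ell2_of x - ell2_of p) m = 0" if "m \<in> ?M" for m
    using nearest_point_orthogonal[OF subspace_ell2_of_closed_subspace[OF C] _ nearest] p that
      cscale_ell2_of_closed_subspace[OF C that, of \<i>]
    by (simp add: cinner_eq_Complex complex_eq_iff)
  hence "(\<lambda>a. x a - p a) \<in> orth I C"
    using x p C_l2 by (auto simp: orth_def l2_diff l2_inner_ell2_of l2_square_summable
        square_summable_diff ell2_of_diff C_summable)
  thus ?thesis using p by blast
qed

definition l2_bounded_linear :: "'i set \<Rightarrow> 'j set \<Rightarrow> (('i \<Rightarrow> complex) \<Rightarrow> ('j \<Rightarrow> complex)) \<Rightarrow> bool"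
  where "l2_bounded_linear I J T \<longleftrightarrow> (\<forall>x\<in>l2 I. T x \<in> l2 J) \<and>
     (\<forall>x\<in>l2 I. \<forall>y\<in>l2 I. T (\<lambda>a. x a + y a) = (\<lambda>b. T x b + T y b)) \<and>
     (\<forall>c. \<forall>x\<in>l2 I. T (\<lambda>a. c * x a) = (\<lambda>b. c * T x b)) \<and>
     (\<exists>K. \<forall>x\<in>l2 I. l2_norm (T x) \<le> K * l2_norm x)"

lemma l2_bounded_linear_l2: "l2_bounded_linear I J T \<Longrightarrow> x \<in> l2 I \<Longrightarrow> T x \<in> l2 J"
  and l2_bounded_linear_add: "l2_bounded_linear I J T \<Longrightarrow> x \<in> l2 I \<Longrightarrow> y \<in> l2 I \<Longrightarrow>
    T (\<lambda>a. x a + y a) = (\<lambda>b. T x b + T y b)"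
  and l2_bounded_linear_scale: "l2_bounded_linear I J T \<Longrightarrow> x \<in> l2 I \<Longrightarrow>
    T (\<lambda>a. c * x a) = (\<lambda>b. c * T x b)"
  by (simp_all add: l2_bounded_linear_def)

lemma l2_bounded_linear_diff:
  assumes T: "l2_bounded_linear I J T" and x: "x \<in> l2 I" and y: "y \<in> l2 I"
  shows "T (\<lambda>a. x a - y a) = (\<lambda>b. T x b - T y b)"
proof -
  have "T (\<lambda>a. x a - y a) = T (\<lambda>a. x a + (-1) * y a)" by simp
  also have "\<dots> = (\<lambda>b. T x b + T (\<lambda>a. (-1) * y a) b)" by (rule l2_bounded_linear_add[OF T x l2_scale[OF y]])
  also have "\<dots> = (\<lambda>b. T x b + (-1) * T y b)" by (simp only: l2_bounded_linear_scale[OF T y])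
  finally show ?thesis by simp
qed

lemma l2_bounded_linear_tendsto:
  assumes T: "l2_bounded_linear I J T" and u: "\<And>n. u n \<in> l2 I" and x: "x \<in> l2 I"
    and lim: "l2_tendsto u x"
  shows "l2_tendsto (\<lambda>n. T (u n)) (T x)"
proof -
  obtain K where K: "\<And>y. y \<in> l2 I \<Longrightarrow> l2_norm (T y) \<le> K * l2_norm y"
    using T unfolding l2_bounded_linear_def by blast
  show ?thesis
    unfolding l2_tendsto_def
  proof (rule Lim_null_comparison)
    show "\<forall>\<^sub>F n in sequentially. norm (l2_norm (\<lambda>b. T (u n) b - T x b)) \<le> K * l2_norm (\<lambda>a. u n a - x a)"
      using K[OF l2_diff[OF u x]]
      by (simp add: l2_bounded_linear_diff[OF T u x, symmetric] l2_norm_nonneg)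
    show "(\<lambda>n. K * l2_norm (\<lambda>a. u n a - x a)) \<longlonglongrightarrow> 0"
      using tendsto_mult_right_zero[OF lim[unfolded l2_tendsto_def]] .
  qed
qed

lemma l2_bounded_linear_cl_span:
  assumes T: "l2_bounded_linear I J T" and S: "S \<subseteq> l2 I" and x: "x \<in> cl_span I S"
  shows "T x \<in> cl_span J (T ` S)"
proof -
  have TS_l2: "T ` S \<subseteq> l2 J" using S l2_bounded_linear_l2[OF T] by blast
  have span: "closed_subspace J (cl_span J (T ` S))" by (rule closed_subspace_cl_span[OF TS_l2])
  let ?M = "{x \<in> l2 I. T x \<in> cl_span J (T ` S)}"
  have "closed_subspace I ?M"
    unfolding closed_subspace_def
  proof (intro conjI ballI allI subsetI)
    have "T (\<lambda>a. 0) = (\<lambda>b. 0)" using l2_bounded_linear_scale[OF T l2_zero, of 0] by simp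
    thus "(\<lambda>a. 0) \<in> ?M" using span l2_zero by (simp add: closed_subspace_def)
    show "(\<lambda>a. y a + z a) \<in> ?M" if "y \<in> ?M" "z \<in> ?M" for y z
      using that span by (simp add: closed_subspace_def l2_bounded_linear_add[OF T] l2_add)
    show "(\<lambda>a. c * y a) \<in> ?M" if "y \<in> ?M" for c y
      using that span by (simp add: closed_subspace_def l2_bounded_linear_scale[OF T] l2_scale)
    show "y \<in> ?M" if y_closure: "y \<in> l2_closure I ?M" for y
    proof -
      obtain u where y: "y \<in> l2 I" and u: "\<And>n. u n \<in> ?M" and lim: "l2_tendsto u y"
        using y_closure by (auto simp: l2_closure_iff)
      have "l2_tendsto (\<lambda>n. T (u n)) (T y)"
        using u y lim by (intro l2_bounded_linear_tendsto[OF T]) auto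
      hence "T y \<in> l2_closure J (cl_span J (T ` S))"
        unfolding l2_closure_iff using u y l2_bounded_linear_l2[OF T]
        by (intro conjI exI[of _ "\<lambda>n. T (u n)"]) auto
      thus ?thesis using span y by (auto simp: closed_subspace_def)
    qed
  qed auto
  moreover have "S \<subseteq> ?M" using S cl_span_superset[OF TS_l2] by auto
  ultimately show ?thesis using cl_span_minimal x by blast
qed

lemma l2_bounded_linear_orth_cl_span:
  assumes T: "l2_bounded_linear I J T" and S: "S \<subseteq> l2 I" and w: "w \<in> orth J (T ` S)"
    and x: "x \<in> cl_span I S"
  shows "l2_inner w (T x) = 0"
proof -
  have "T ` S \<subseteq> l2 J" using S l2_bounded_linear_l2[OF T] by blast
  hence "w \<in> orth J (cl_span J (T ` S))" using w by (simp add: orth_cl_span)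
  thus ?thesis using l2_bounded_linear_cl_span[OF T S x] by (simp add: orth_def)
qed

section \<open>Tensor products\<close>

lemma tensor_apply: "tensor f g x = f (fst x) * g (snd x)"
  by (simp add: tensor_def case_prod_beta)

lemma tensor_add_left: "tensor (\<lambda>a. f a + f' a) g = (\<lambda>x. tensor f g x + tensor f' g x)"
  and tensor_add_right: "tensor g (\<lambda>a. f a + f' a) = (\<lambda>x. tensor g f x + tensor g f' x)"
  and tensor_scale_left: "tensor (\<lambda>a. c * f a) g = (\<lambda>x. c * tensor f g x)"
  and tensor_scale_right: "tensor g (\<lambda>a. c * f a) = (\<lambda>x. c * tensor g f x)"
  by (simp_all add: tensor_apply fun_eq_iff algebra_simps)

lemma abs_summable_tensor:
  fixes u :: "'a \<Rightarrow> complex" and v :: "'b \<Rightarrow> complex"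
  assumes u: "(\<lambda>a. norm (u a)) summable_on UNIV" and v: "(\<lambda>b. norm (v b)) summable_on UNIV"
  shows "(\<lambda>x. norm (tensor u v x)) summable_on UNIV"
proof (rule nonneg_bdd_above_summable_on)
  show "bdd_above (sum (\<lambda>x. norm (tensor u v x)) ` {F. F \<subseteq> UNIV \<and> finite F})"
  proof (rule bdd_aboveI2)
    fix F :: "('a \<times> 'b) set" assume "F \<in> {F. F \<subseteq> UNIV \<and> finite F}"
    hence F: "finite F" by simp
    have "(\<Sum>x\<in>F. norm (tensor u v x)) \<le> (\<Sum>x\<in>fst ` F \<times> snd ` F. norm (tensor u v x))"
      using F by (intro sum_mono2) (auto intro: rev_image_eqI)
    also have "\<dots> = (\<Sum>a\<in>fst ` F. norm (u a)) * (\<Sum>b\<in>snd ` F. norm (v b))"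
      by (simp add: sum_product sum.cartesian_product norm_mult tensor_apply case_prod_beta)
    also have "\<dots> \<le> (\<Sum>\<^sub>\<infinity>a. norm (u a)) * (\<Sum>\<^sub>\<infinity>b. norm (v b))"
      using F u v by (intro mult_mono finite_sum_le_infsum sum_nonneg infsum_nonneg) auto
    finally show "(\<Sum>x\<in>F. norm (tensor u v x)) \<le> (\<Sum>\<^sub>\<infinity>a. norm (u a)) * (\<Sum>\<^sub>\<infinity>b. norm (v b))" .
  qed
qed simp

lemma infsum_tensor:
  fixes u :: "'a \<Rightarrow> complex" and v :: "'b \<Rightarrow> complex"
  assumes u: "(\<lambda>a. norm (u a)) summable_on UNIV" and v: "(\<lambda>b. norm (v b)) summable_on UNIV"
  shows "(\<Sum>\<^sub>\<infinity>x. tensor u v x) = (\<Sum>\<^sub>\<infinity>a. u a) * (\<Sum>\<^sub>\<infinity>b. v b)"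
proof -
  have "(\<lambda>(a, b). u a * v b) summable_on UNIV \<times> UNIV"
    using abs_summable_summable[OF abs_summable_tensor[OF u v]] by (simp add: tensor_def)
  hence "(\<Sum>\<^sub>\<infinity>x. tensor u v x) = (\<Sum>\<^sub>\<infinity>a. \<Sum>\<^sub>\<infinity>b. u a * v b)"
    by (simp add: tensor_def infsum_Sigma'_banach)
  also have "\<dots> = (\<Sum>\<^sub>\<infinity>a. u a) * (\<Sum>\<^sub>\<infinity>b. v b)"
    using abs_summable_summable[OF u] abs_summable_summable[OF v]
    by (simp add: infsum_cmult_right infsum_cmult_left)
  finally show ?thesis .
qed

lemma square_summable_tensor:
  assumes "square_summable f" "square_summable g" shows "square_summable (tensor f g)"
proof -
  have "(\<lambda>x. norm (tensor (\<lambda>a. complex_of_real ((cmod (f a))^2)) (\<lambda>b. complex_of_real ((cmod (g b))^2)) x))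
      summable_on UNIV"
    using assms by (intro abs_summable_tensor) (simp_all add: square_summable_def norm_power)
  thus ?thesis by (simp add: square_summable_def tensor_apply norm_mult norm_power power_mult_distrib)
qed

lemma tensor_l2: "f \<in> l2 I \<Longrightarrow> g \<in> l2 J \<Longrightarrow> tensor f g \<in> l2 (I \<times> J)"
  by (auto simp: l2_iff square_summable_tensor tensor_apply)

lemma l2_inner_tensor:
  assumes "square_summable f" "square_summable g" "square_summable f'" "square_summable g'"
  shows "l2_inner (tensor f g) (tensor f' g') = l2_inner f f' * l2_inner g g'"
proof -
  have "l2_inner (tensor f g) (tensor f' g') = (\<Sum>\<^sub>\<infinity>x. tensor (\<lambda>a. f a * cnj (f' a)) (\<lambda>b. g b * cnj (g' b)) x)"
    unfolding l2_inner_def tensor_apply by (simp add: mult_ac)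
  also have "\<dots> = l2_inner f f' * l2_inner g g'"
    unfolding l2_inner_def using assms by (intro infsum_tensor square_summable_inner_abs_summable)
  finally show ?thesis .
qed

lemma l2_norm_tensor:
  assumes f: "square_summable f" and g: "square_summable g"
  shows "l2_norm (tensor f g) = l2_norm f * l2_norm g"
proof -
  have "l2_norm (tensor f g) = sqrt (Re (l2_inner f f * l2_inner g g))"
    using assms by (simp add: l2_norm_sqrt_inner square_summable_tensor l2_inner_tensor)
  also have "\<dots> = sqrt (Re (l2_inner f f)) * sqrt (Re (l2_inner g g))"
    using assms by (simp add: l2_inner_self real_sqrt_mult)
  finally show ?thesis using assms by (simp add: l2_norm_sqrt_inner)
qed

lemma l2_bounded_linear_tensor_left:
  assumes "y \<in> l2 J" shows "l2_bounded_linear I (I \<times> J) (\<lambda>x. tensor x y)"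
  unfolding l2_bounded_linear_def using assms
  by (auto simp: tensor_l2 tensor_add_left tensor_scale_left l2_norm_tensor l2_square_summable
      intro!: exI[of _ "l2_norm y"])

lemma l2_bounded_linear_tensor_right:
  assumes "x \<in> l2 I" shows "l2_bounded_linear J (I \<times> J) (\<lambda>y. tensor x y)"
  unfolding l2_bounded_linear_def using assms
  by (auto simp: tensor_l2 tensor_add_right tensor_scale_right l2_norm_tensor l2_square_summable
      intro!: exI[of _ "l2_norm x"])

lemma subset_orth_swap: "F \<subseteq> l2 I \<Longrightarrow> S \<subseteq> orth I F \<Longrightarrow> F \<subseteq> orth I S"
  unfolding orth_def using l2_inner_eq_0_commute by blast

lemma tensor_orth_htensor_left:
  assumes x: "x \<in> orth I F" and y: "y \<in> l2 J" and F: "F \<subseteq> l2 I" "F' \<subseteq> l2 J"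
  shows "tensor x y \<in> orth (I \<times> J) (htensor I J F F')"
proof -
  have gens: "{tensor a b | a b. a \<in> F \<and> b \<in> F'} \<subseteq> l2 (I \<times> J)" using F by (auto intro: tensor_l2)
  have "l2_inner (tensor x y) (tensor a b) = 0" if "a \<in> F" "b \<in> F'" for a b
    using that x y F by (subst l2_inner_tensor) (auto simp: orth_def intro: l2_square_summable)
  hence "tensor x y \<in> orth (I \<times> J) {tensor a b | a b. a \<in> F \<and> b \<in> F'}"
    using x y by (auto simp: orth_def tensor_l2)
  thus ?thesis unfolding htensor_def orth_cl_span[OF gens] .
qed

lemma tensor_orth_htensor_right:
  assumes x: "x \<in> l2 I" and y: "y \<in> orth J F'" and F: "F \<subseteq> l2 I" "F' \<subseteq> l2 J"
  shows "tensor x y \<in> orth (I \<times> J) (htensor I J F F')"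
proof -
  have gens: "{tensor a b | a b. a \<in> F \<and> b \<in> F'} \<subseteq> l2 (I \<times> J)" using F by (auto intro: tensor_l2)
  have "l2_inner (tensor x y) (tensor a b) = 0" if "a \<in> F" "b \<in> F'" for a b
    using that x y F by (subst l2_inner_tensor) (auto simp: orth_def intro: l2_square_summable)
  hence "tensor x y \<in> orth (I \<times> J) {tensor a b | a b. a \<in> F \<and> b \<in> F'}"
    using x y by (auto simp: orth_def tensor_l2)
  thus ?thesis unfolding htensor_def orth_cl_span[OF gens] .
qed

text \<open>Splitting the basis vectors \<open>e\<^sub>i = c\<^sub>i + a\<^sub>i\<close> along \<open>C \<oplus> C\<^sup>\<perp>\<close> and \<open>e\<^sub>j = d\<^sub>j + b\<^sub>j\<close>
  along \<open>D \<oplus> D\<^sup>\<perp>\<close> gives \<open>e\<^sub>i \<otimes> e\<^sub>j = c\<^sub>i \<otimes> e\<^sub>j + a\<^sub>i \<otimes> d\<^sub>j + a\<^sub>i \<otimes> b\<^sub>j\<close>.\<close>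
lemma eq_0_if_orth_tensor_decomposition:
  assumes C: "closed_subspace I C" and D: "closed_subspace J D" and q: "q \<in> l2 (I \<times> J)"
    and orth_C: "\<And>c y. c \<in> C \<Longrightarrow> y \<in> l2 J \<Longrightarrow> l2_inner q (tensor c y) = 0"
    and orth_D: "\<And>x d. x \<in> l2 I \<Longrightarrow> d \<in> D \<Longrightarrow> l2_inner q (tensor x d) = 0"
    and orth_CD: "\<And>x y. x \<in> orth I C \<Longrightarrow> y \<in> orth J D \<Longrightarrow> l2_inner q (tensor x y) = 0"
  shows "q = (\<lambda>_. 0)"
proof
  fix p
  show "q p = 0"
  proof (cases "p \<in> I \<times> J")
    case False thus ?thesis using q by (cases p) (auto simp: l2_def)
  next
    case True
    then obtain i j where p: "p = (i, j)" and i: "i \<in> I" and j: "j \<in> J" by blast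
    define ei where "ei = (\<lambda>a. if a = i then (1::complex) else 0)"
    define ej where "ej = (\<lambda>b. if b = j then (1::complex) else 0)"
    have ei: "ei \<in> l2 I" and ej: "ej \<in> l2 J" unfolding ei_def ej_def using i j by (simp_all add: l2_indicator)
    obtain ci where ci: "ci \<in> C" and ai: "(\<lambda>a. ei a - ci a) \<in> orth I C"
      using closed_subspace_projection[OF C ei] by blast
    obtain dj where dj: "dj \<in> D" and bj: "(\<lambda>b. ej b - dj b) \<in> orth J D"
      using closed_subspace_projection[OF D ej] by blast
    define ai' bj' where "ai' = (\<lambda>a. ei a - ci a)" and "bj' = (\<lambda>b. ej b - dj b)"
    have l2: "ci \<in> l2 I" "dj \<in> l2 J" "ai' \<in> l2 I" "bj' \<in> l2 J"
      using C D ci dj ai bj orth_l2 by (auto simp: closed_subspace_def ai'_def bj'_def)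
    have "tensor ei ej = (\<lambda>x. tensor ci ej x + (tensor ai' dj x + tensor ai' bj' x))"
      by (simp add: fun_eq_iff tensor_apply ai'_def bj'_def algebra_simps)
    moreover have "tensor ei ej = (\<lambda>x. if x = (i, j) then 1 else 0)"
      by (auto simp: fun_eq_iff tensor_apply ei_def ej_def)
    ultimately have "q (i, j) = l2_inner q (tensor ci ej) + (l2_inner q (tensor ai' dj) + l2_inner q (tensor ai' bj'))"
      using q l2 ej by (metis (no_types) l2_inner_indicator l2_inner_add_right l2_square_summable
          square_summable_tensor square_summable_add)
    also have "\<dots> = 0"
      using orth_C[OF ci ej] orth_D[OF l2(3) dj] orth_CD ai bj by (simp add: ai'_def bj'_def)
    finally show ?thesis using p by simp
  qed
qed

lemma htensor_orthI:
  assumes C: "closed_subspace I C" and D: "closed_subspace J D" and w: "w \<in> l2 (I \<times> J)"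
    and orth_C: "\<And>c y. c \<in> C \<Longrightarrow> y \<in> l2 J \<Longrightarrow> l2_inner w (tensor c y) = 0"
    and orth_D: "\<And>x d. x \<in> l2 I \<Longrightarrow> d \<in> D \<Longrightarrow> l2_inner w (tensor x d) = 0"
  shows "w \<in> htensor I J (orth I C) (orth J D)"
proof -
  let ?W = "htensor I J (orth I C) (orth J D)"
  have C_l2: "C \<subseteq> l2 I" and D_l2: "D \<subseteq> l2 J" using C D by (simp_all add: closed_subspace_def)
  have "closed_subspace (I \<times> J) ?W"
    unfolding htensor_def by (intro closed_subspace_cl_span) (auto intro: tensor_l2 orth_l2[THEN subsetD])
  then obtain p where p: "p \<in> ?W" and q: "(\<lambda>a. w a - p a) \<in> orth (I \<times> J) ?W"
    using closed_subspace_projection w by blast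
  have p_l2: "p \<in> l2 (I \<times> J)" using p by (simp add: htensor_def cl_span_l2[THEN subsetD])
  have p_orth: "l2_inner p z = 0" if "z \<in> orth (I \<times> J) ?W" for z
    using p that l2_inner_eq_0_commute[of z p] by (simp add: orth_def)
  have inner_q: "l2_inner (\<lambda>a. w a - p a) (tensor x y) = l2_inner w (tensor x y) - l2_inner p (tensor x y)"
    if "x \<in> l2 I" "y \<in> l2 J" for x y
    using w p_l2 that by (intro l2_inner_diff_left) (auto intro: l2_square_summable tensor_l2)
  have "(\<lambda>a. w a - p a) = (\<lambda>_. 0)"
  proof (rule eq_0_if_orth_tensor_decomposition[OF C D])
    show "(\<lambda>a. w a - p a) \<in> l2 (I \<times> J)" using w p_l2 by (rule l2_diff)
    show "l2_inner (\<lambda>a. w a - p a) (tensor c y) = 0" if "c \<in> C" "y \<in> l2 J" for c y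
    proof -
      have "tensor c y \<in> orth (I \<times> J) ?W"
        by (rule tensor_orth_htensor_left) (use that subset_orth_swap[OF C_l2 order.refl] orth_l2 in auto)
      moreover have "c \<in> l2 I" using that C_l2 by blast
      ultimately show ?thesis using that by (simp add: inner_q orth_C p_orth)
    qed
    show "l2_inner (\<lambda>a. w a - p a) (tensor x d) = 0" if "x \<in> l2 I" "d \<in> D" for x d
    proof -
      have "tensor x d \<in> orth (I \<times> J) ?W"
        by (rule tensor_orth_htensor_right) (use that subset_orth_swap[OF D_l2 order.refl] orth_l2 in auto)
      moreover have "d \<in> l2 J" using that D_l2 by blast
      ultimately show ?thesis using that by (simp add: inner_q orth_D p_orth)
    qed
    show "l2_inner (\<lambda>a. w a - p a) (tensor x y) = 0" if "x \<in> orth I C" "y \<in> orth J D" for x y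
    proof -
      have "{tensor a b | a b. a \<in> orth I C \<and> b \<in> orth J D} \<subseteq> l2 (I \<times> J)"
        by (auto intro: tensor_l2 orth_l2[THEN subsetD])
      hence "tensor x y \<in> ?W" unfolding htensor_def using that by (blast dest: cl_span_superset)
      thus ?thesis using q by (simp add: orth_def)
    qed
  qed
  hence "w = p" by (simp add: fun_eq_iff)
  thus ?thesis using p by simp
qed

section \<open>Unitaries and product systems\<close>

lemma unitary_l2_mem: "unitary_l2 I J U \<Longrightarrow> x \<in> l2 I \<Longrightarrow> U x \<in> l2 J"
  unfolding unitary_l2_def by blast

lemma unitary_l2_surj:
  assumes "unitary_l2 I J U" "y \<in> l2 J" shows "\<exists>x\<in>l2 I. U x = y"
proof -
  have "y \<in> U ` l2 I" using assms by (simp add: unitary_l2_def)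
  thus ?thesis by blast
qed

lemma unitary_l2_inner:
  "unitary_l2 I J U \<Longrightarrow> x \<in> l2 I \<Longrightarrow> y \<in> l2 I \<Longrightarrow> l2_inner (U x) (U y) = l2_inner x y"
  unfolding unitary_l2_def by blast

lemma unitary_l2_scale: "unitary_l2 I J U \<Longrightarrow> x \<in> l2 I \<Longrightarrow> U (\<lambda>a. c * x a) = (\<lambda>b. c * U x b)"
  unfolding unitary_l2_def by blast

lemma unitary_l2_add:
  "unitary_l2 I J U \<Longrightarrow> x \<in> l2 I \<Longrightarrow> y \<in> l2 I \<Longrightarrow> U (\<lambda>a. x a + y a) = (\<lambda>b. U x b + U y b)"
  unfolding unitary_l2_def by blast

lemma unitary_l2_inj:
  assumes U: "unitary_l2 I J U" and x: "x \<in> l2 I" and y: "y \<in> l2 I" and eq: "U x = U y"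
  shows "x = y"
proof -
  define d where "d = (\<lambda>a. x a + (-1) * y a)"
  have y': "(\<lambda>a. (-1) * y a) \<in> l2 I" using y by (rule l2_scale)
  have d: "d \<in> l2 I" unfolding d_def using x y' by (rule l2_add)
  have "U d = (\<lambda>b. U x b + U (\<lambda>a. (-1) * y a) b)" unfolding d_def using U x y' by (rule unitary_l2_add)
  also have "\<dots> = (\<lambda>b. 0)" using unitary_l2_scale[OF U y, of "-1"] eq by simp
  finally have "l2_inner d d = 0" using unitary_l2_inner[OF U d d] by simp
  hence "d = (\<lambda>a. 0)" using d by (intro l2_inner_self_eq_0 l2_square_summable)
  thus ?thesis unfolding d_def by (simp add: fun_eq_iff)
qed

lemma unitary_l2_orth_image:
  assumes U: "unitary_l2 I J U" and S: "S \<subseteq> l2 I" and z: "z \<in> orth I S"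
  shows "U z \<in> orth J (U ` S)"
proof -
  have "l2_inner (U z) (U s) = 0" if "s \<in> S" for s
    using that z S by (simp add: unitary_l2_inner[OF U] orth_def subset_iff)
  thus ?thesis using z by (simp add: orth_def unitary_l2_mem[OF U])
qed

lemma l2_row:
  assumes "h \<in> l2 (I \<times> J)" shows "(\<lambda>b. h (a, b)) \<in> l2 J"
proof -
  have "(\<lambda>x. (cmod (h x))^2) summable_on UNIV"
    using assms by (simp add: l2_iff square_summable_def)
  hence "(\<lambda>x. (cmod (h x))^2) summable_on Pair a ` UNIV" by (rule summable_on_subset_banach) simp
  hence "((\<lambda>x. (cmod (h x))^2) \<circ> Pair a) summable_on UNIV"
    by (subst summable_on_reindex[symmetric]) (auto simp: inj_on_def)
  thus ?thesis using assms by (simp add: l2_iff square_summable_def o_def)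
qed

lemma l2_column:
  assumes "h \<in> l2 (I \<times> J)" shows "(\<lambda>a. h (a, b)) \<in> l2 I"
proof -
  have "(\<lambda>x. (cmod (h x))^2) summable_on UNIV"
    using assms by (simp add: l2_iff square_summable_def)
  hence "(\<lambda>x. (cmod (h x))^2) summable_on (\<lambda>a. (a, b)) ` UNIV" by (rule summable_on_subset_banach) simp
  hence "((\<lambda>x. (cmod (h x))^2) \<circ> (\<lambda>a. (a, b))) summable_on UNIV"
    by (subst summable_on_reindex[symmetric]) (auto simp: inj_on_def)
  thus ?thesis using assms by (simp add: l2_iff square_summable_def o_def)
qed

lemma product_system_unitary:
  "product_system E V \<Longrightarrow> 0 < s \<Longrightarrow> 0 < t \<Longrightarrow> unitary_l2 (E (s + t)) (E s \<times> E t) (V s t)"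
  unfolding product_system_def by blast

lemma product_system_assoc:
  assumes "product_system E V" "0 < r" "0 < s" "0 < t" "g \<in> l2 (E (r + s + t))"
  shows "V r s (\<lambda>a'. V (r + s) t g (a', c)) (a, b) = V s t (\<lambda>b'. V r (s + t) g (a, b')) (b, c)"
  using assms unfolding product_system_def op_tensor_id_def id_tensor_op_def by auto

lemma product_system_reassoc_left:
  assumes ps: "product_system E V" and pos: "0 < r" "0 < s" "0 < t"
    and g: "g \<in> l2 (E (r + s + t))" and u: "u \<in> l2 (E (r + s))" and v: "v \<in> l2 (E (s + t))"
    and Vg: "V (r + s) t g = tensor u z" and Vu: "V r s u = tensor x y" and Vv: "V s t v = tensor y z"
  shows "V r (s + t) g = tensor x v"
proof -
  have U_rs: "unitary_l2 (E (r + s)) (E r \<times> E s) (V r s)"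
    and U_st: "unitary_l2 (E (s + t)) (E s \<times> E t) (V s t)"
    and U_r_st: "unitary_l2 (E (r + (s + t))) (E r \<times> E (s + t)) (V r (s + t))"
    using pos by (simp_all add: product_system_unitary[OF ps])
  have h: "V r (s + t) g \<in> l2 (E r \<times> E (s + t))"
    using unitary_l2_mem[OF U_r_st] g by (simp add: add.assoc)
  have row: "(\<lambda>b. V r (s + t) g (a, b)) = (\<lambda>b. x a * v b)" for a
  proof (rule unitary_l2_inj[OF U_st l2_row[OF h] l2_scale[OF v]], rule ext, clarify)
    fix b c
    have "V s t (\<lambda>b'. V r (s + t) g (a, b')) (b, c) = V r s (\<lambda>a'. V (r + s) t g (a', c)) (a, b)"
      using product_system_assoc[OF ps pos g] by simp
    also have "\<dots> = V r s (\<lambda>a'. z c * u a') (a, b)" by (simp add: Vg tensor_apply mult.commute)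
    also have "\<dots> = x a * (y b * z c)" by (simp add: unitary_l2_scale[OF U_rs u] Vu tensor_apply)
    also have "\<dots> = V s t (\<lambda>b'. x a * v b') (b, c)" by (simp add: unitary_l2_scale[OF U_st v] Vv tensor_apply)
    finally show "V s t (\<lambda>b'. V r (s + t) g (a, b')) (b, c) = V s t (\<lambda>b'. x a * v b') (b, c)" .
  qed
  show ?thesis
  proof (rule ext, clarify)
    fix a b show "V r (s + t) g (a, b) = tensor x v (a, b)"
      using fun_cong[OF row[of a], of b] by (simp add: tensor_apply)
  qed
qed

lemma product_system_reassoc_right:
  assumes ps: "product_system E V" and pos: "0 < r" "0 < s" "0 < t"
    and g: "g \<in> l2 (E (r + s + t))" and u: "u \<in> l2 (E (r + s))" and v: "v \<in> l2 (E (s + t))"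
    and Vg: "V r (s + t) g = tensor x v" and Vv: "V s t v = tensor y z" and Vu: "V r s u = tensor x y"
  shows "V (r + s) t g = tensor u z"
proof -
  have U_rs: "unitary_l2 (E (r + s)) (E r \<times> E s) (V r s)"
    and U_st: "unitary_l2 (E (s + t)) (E s \<times> E t) (V s t)"
    and U_rs_t: "unitary_l2 (E (r + s + t)) (E (r + s) \<times> E t) (V (r + s) t)"
    using pos by (simp_all add: product_system_unitary[OF ps])
  have h: "V (r + s) t g \<in> l2 (E (r + s) \<times> E t)" using unitary_l2_mem[OF U_rs_t g] .
  have column: "(\<lambda>a. V (r + s) t g (a, c)) = (\<lambda>a. z c * u a)" for c
  proof (rule unitary_l2_inj[OF U_rs l2_column[OF h] l2_scale[OF u]], rule ext, clarify)
    fix a b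
    have "V r s (\<lambda>a'. V (r + s) t g (a', c)) (a, b) = V s t (\<lambda>b'. V r (s + t) g (a, b')) (b, c)"
      by (rule product_system_assoc[OF ps pos g])
    also have "\<dots> = V s t (\<lambda>b'. x a * v b') (b, c)" by (simp add: Vg tensor_apply)
    also have "\<dots> = z c * (x a * y b)" by (simp add: unitary_l2_scale[OF U_st v] Vv tensor_apply)
    also have "\<dots> = V r s (\<lambda>a'. z c * u a') (a, b)" by (simp add: unitary_l2_scale[OF U_rs u] Vu tensor_apply)
    finally show "V r s (\<lambda>a'. V (r + s) t g (a', c)) (a, b) = V r s (\<lambda>a'. z c * u a') (a, b)" .
  qed
  show ?thesis
  proof (rule ext, clarify)
    fix a c show "V (r + s) t g (a, c) = tensor u z (a, c)"
      using fun_cong[OF column[of c], of a] by (simp add: tensor_apply mult.commute)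
  qed
qed

section \<open>Inclusion subsystems\<close>

lemma inclusion_subsystem_closed_subspace:
  "inclusion_subsystem E V F \<Longrightarrow> 0 < t \<Longrightarrow> closed_subspace (E t) (F t)"
  by (simp add: inclusion_subsystem_def)

lemma inclusion_subsystem_l2: "inclusion_subsystem E V F \<Longrightarrow> 0 < t \<Longrightarrow> F t \<subseteq> l2 (E t)"
  using inclusion_subsystem_closed_subspace[of E V F t] by (simp add: closed_subspace_def)

lemma inclusion_subsystem_htensor:
  assumes "inclusion_subsystem E V F" "0 < s" "0 < t" "f \<in> F (s + t)"
  shows "V s t f \<in> htensor (E s) (E t) (F s) (F t)"
proof -
  have "V s t ` F (s + t) \<subseteq> htensor (E s) (E t) (F s) (F t)"
    using assms(1-3) by (simp add: inclusion_subsystem_def)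
  thus ?thesis using assms(4) by blast
qed

lemma inclusion_subsystem_orth_tensor:
  assumes ps: "product_system E V" and F: "inclusion_subsystem E V F" and "0 < s" "0 < t"
    and u: "u \<in> l2 (E (s + t))" and x: "x \<in> l2 (E s)" and y: "y \<in> l2 (E t)"
    and xy: "x \<in> orth (E s) (F s) \<or> y \<in> orth (E t) (F t)" and Vu: "V s t u = tensor x y"
  shows "u \<in> orth (E (s + t)) (F (s + t))"
proof -
  have F_l2: "F s \<subseteq> l2 (E s)" "F t \<subseteq> l2 (E t)" "F (s + t) \<subseteq> l2 (E (s + t))"
    using F \<open>0 < s\<close> \<open>0 < t\<close> by (simp_all add: inclusion_subsystem_l2)
  have tensor_orth: "tensor x y \<in> orth (E s \<times> E t) (htensor (E s) (E t) (F s) (F t))"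
  proof (cases "x \<in> orth (E s) (F s)")
    case True
    thus ?thesis by (rule tensor_orth_htensor_left[OF _ y F_l2(1,2)])
  next
    case False
    hence "y \<in> orth (E t) (F t)" using xy by blast
    thus ?thesis by (rule tensor_orth_htensor_right[OF x _ F_l2(1,2)])
  qed
  have "l2_inner u f = 0" if f: "f \<in> F (s + t)" for f
  proof -
    have "f \<in> l2 (E (s + t))" using f F_l2(3) by blast
    hence "l2_inner u f = l2_inner (tensor x y) (V s t f)"
      using unitary_l2_inner[OF product_system_unitary[OF ps \<open>0 < s\<close> \<open>0 < t\<close>] u] Vu by simp
    also have "\<dots> = 0"
      using tensor_orth inclusion_subsystem_htensor[OF F \<open>0 < s\<close> \<open>0 < t\<close> f] by (simp add: orth_def)
    finally show ?thesis .
  qed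
  thus ?thesis using u by (simp add: orth_def)
qed

definition orth_product_vectors ::
    "(real \<Rightarrow> 'i set) \<Rightarrow> (real \<Rightarrow> real \<Rightarrow> ('i \<Rightarrow> complex) \<Rightarrow> ('i \<times> 'i \<Rightarrow> complex))
      \<Rightarrow> (real \<Rightarrow> ('i \<Rightarrow> complex) set) \<Rightarrow> (real \<Rightarrow> ('i \<Rightarrow> complex) set) \<Rightarrow> real \<Rightarrow> ('i \<Rightarrow> complex) set"
  where "orth_product_vectors E V F1 F2 t = {z \<in> l2 (E t). \<exists>r x y. 0 < r \<and> r < t \<and>
      x \<in> orth (E r) (F1 r) \<and> y \<in> orth (E (t - r)) (F2 (t - r)) \<and> V r (t - r) z = tensor x y}"

lemma orth_product_vectors_l2: "orth_product_vectors E V F1 F2 t \<subseteq> l2 (E t)"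
  unfolding orth_product_vectors_def by blast

lemma orth_product_vectors_orth:
  assumes ps: "product_system E V" and F1: "inclusion_subsystem E V F1"
    and F2: "inclusion_subsystem E V F2" and z: "z \<in> orth_product_vectors E V F1 F2 t"
  shows "z \<in> orth (E t) (F1 t) \<inter> orth (E t) (F2 t)"
proof -
  obtain r x y where z_l2: "z \<in> l2 (E (r + (t - r)))" and r: "0 < r" "0 < t - r"
    and x: "x \<in> orth (E r) (F1 r)" and y: "y \<in> orth (E (t - r)) (F2 (t - r))"
    and Vz: "V r (t - r) z = tensor x y"
    using z by (auto simp: orth_product_vectors_def)
  have "x \<in> l2 (E r)" "y \<in> l2 (E (t - r))" using x y orth_l2 by blast+
  hence "z \<in> orth (E (r + (t - r))) (F1 (r + (t - r)))" "z \<in> orth (E (r + (t - r))) (F2 (r + (t - r)))"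
    using inclusion_subsystem_orth_tensor[OF ps _ r z_l2 _ _ _ Vz] F1 F2 x y by blast+
  thus ?thesis by simp
qed

lemma orth_product_vectors_tensor_left:
  assumes ps: "product_system E V" and F2: "inclusion_subsystem E V F2" and "0 < s" "0 < t"
    and c: "c \<in> orth_product_vectors E V F1 F2 s" and y: "y \<in> l2 (E t)"
  shows "\<exists>g\<in>orth_product_vectors E V F1 F2 (s + t). V s t g = tensor c y"
proof -
  obtain r x y' where c_l2: "c \<in> l2 (E (r + (s - r)))" and r: "0 < r" "0 < s - r"
    and x: "x \<in> orth (E r) (F1 r)" and y': "y' \<in> orth (E (s - r)) (F2 (s - r))"
    and Vc: "V r (s - r) c = tensor x y'"
    using c by (auto simp: orth_product_vectors_def)
  obtain g where g: "g \<in> l2 (E (r + (s - r) + t))" and Vg: "V (r + (s - r)) t g = tensor c y"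
    using unitary_l2_surj[OF product_system_unitary[OF ps \<open>0 < s\<close> \<open>0 < t\<close>] tensor_l2[OF _ y]] c_l2
    by auto
  obtain v where v: "v \<in> l2 (E (s - r + t))" and Vv: "V (s - r) t v = tensor y' y"
    using unitary_l2_surj[OF product_system_unitary[OF ps r(2) \<open>0 < t\<close>] tensor_l2[OF _ y]] y' orth_l2
    by blast
  have "v \<in> orth (E (s - r + t)) (F2 (s - r + t))"
    using inclusion_subsystem_orth_tensor[OF ps F2 r(2) \<open>0 < t\<close> v _ y _ Vv] y' orth_l2 by blast
  moreover have "V r (s - r + t) g = tensor x v"
    using product_system_reassoc_left[OF ps r \<open>0 < t\<close> g c_l2 v Vg Vc Vv] by simp
  ultimately have "g \<in> orth_product_vectors E V F1 F2 (s + t)"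
    using g r x \<open>0 < t\<close> unfolding orth_product_vectors_def
    by (intro CollectI conjI exI[of _ r] exI[of _ x] exI[of _ v]) (simp_all add: algebra_simps)
  thus ?thesis using Vg by auto
qed

lemma orth_product_vectors_tensor_right:
  assumes ps: "product_system E V" and F1: "inclusion_subsystem E V F1" and "0 < s" "0 < t"
    and x: "x \<in> l2 (E s)" and d: "d \<in> orth_product_vectors E V F1 F2 t"
  shows "\<exists>g\<in>orth_product_vectors E V F1 F2 (s + t). V s t g = tensor x d"
proof -
  obtain r x' y where d_l2: "d \<in> l2 (E (r + (t - r)))" and r: "0 < r" "0 < t - r"
    and x': "x' \<in> orth (E r) (F1 r)" and y: "y \<in> orth (E (t - r)) (F2 (t - r))"
    and Vd: "V r (t - r) d = tensor x' y"
    using d by (auto simp: orth_product_vectors_def)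
  obtain g where g: "g \<in> l2 (E (s + r + (t - r)))" and Vg: "V s (r + (t - r)) g = tensor x d"
    using unitary_l2_surj[OF product_system_unitary[OF ps \<open>0 < s\<close> \<open>0 < t\<close>] tensor_l2[OF x]] d_l2
    by (auto simp: algebra_simps)
  obtain u where u: "u \<in> l2 (E (s + r))" and Vu: "V s r u = tensor x x'"
    using unitary_l2_surj[OF product_system_unitary[OF ps \<open>0 < s\<close> r(1)] tensor_l2[OF x]] x' orth_l2
    by blast
  have "u \<in> orth (E (s + r)) (F1 (s + r))"
    using inclusion_subsystem_orth_tensor[OF ps F1 \<open>0 < s\<close> r(1) u x _ _ Vu] x' orth_l2 by blast
  moreover have "V (s + r) (t - r) g = tensor u y"
    using product_system_reassoc_right[OF ps \<open>0 < s\<close> r g u d_l2 Vg Vd Vu] .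
  ultimately have "g \<in> orth_product_vectors E V F1 F2 (s + t)"
    using g r y \<open>0 < s\<close> unfolding orth_product_vectors_def
    by (intro CollectI conjI exI[of _ "s + r"] exI[of _ u] exI[of _ y]) (simp_all add: algebra_simps)
  thus ?thesis using Vg by auto
qed

text \<open>The closed span of \<open>orth_product_vectors E V F1 F2 t\<close> is \<open>G\<^sub>t\<close>, and
  \<open>orth_product_complement E V F1 F2 t\<close> is \<open>G'\<^sub>t\<close>.\<close>
definition orth_product_complement ::
    "(real \<Rightarrow> 'i set) \<Rightarrow> (real \<Rightarrow> real \<Rightarrow> ('i \<Rightarrow> complex) \<Rightarrow> ('i \<times> 'i \<Rightarrow> complex))
      \<Rightarrow> (real \<Rightarrow> ('i \<Rightarrow> complex) set) \<Rightarrow> (real \<Rightarrow> ('i \<Rightarrow> complex) set) \<Rightarrow> real \<Rightarrow> ('i \<Rightarrow> complex) set"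
  where "orth_product_complement E V F1 F2 t =
    orth (E t) (cl_span (E t) (orth_product_vectors E V F1 F2 t))"

lemma orth_product_complement_eq:
  "orth_product_complement E V F1 F2 t = orth (E t) (orth_product_vectors E V F1 F2 t)"
  by (simp add: orth_product_complement_def orth_cl_span orth_product_vectors_l2)

lemma inclusion_subsystem_subset_orth_product_complement:
  assumes ps: "product_system E V" and F1: "inclusion_subsystem E V F1"
    and F2: "inclusion_subsystem E V F2" and "0 < t"
  shows "F1 t \<subseteq> orth_product_complement E V F1 F2 t \<and> F2 t \<subseteq> orth_product_complement E V F1 F2 t"
proof -
  have "orth_product_vectors E V F1 F2 t \<subseteq> orth (E t) (F1 t) \<inter> orth (E t) (F2 t)"
    using orth_product_vectors_orth[OF ps F1 F2] by blast
  thus ?thesis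
    unfolding orth_product_complement_eq
    using subset_orth_swap[OF inclusion_subsystem_l2[OF F1 \<open>0 < t\<close>]]
      subset_orth_swap[OF inclusion_subsystem_l2[OF F2 \<open>0 < t\<close>]]
    by blast
qed

lemma inclusion_subsystem_orth_product_complement:
  assumes ps: "product_system E V" and F1: "inclusion_subsystem E V F1"
    and F2: "inclusion_subsystem E V F2"
  shows "inclusion_subsystem E V (orth_product_complement E V F1 F2)"
proof -
  let ?P = "orth_product_vectors E V F1 F2"
  have G_closed: "closed_subspace (E t) (cl_span (E t) (?P t))" for t
    by (rule closed_subspace_cl_span[OF orth_product_vectors_l2])
  have "V s t w \<in> htensor (E s) (E t) (orth_product_complement E V F1 F2 s)
      (orth_product_complement E V F1 F2 t)"
    if "0 < s" "0 < t" "w \<in> orth_product_complement E V F1 F2 (s + t)" for s t w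
  proof -
    have U: "unitary_l2 (E (s + t)) (E s \<times> E t) (V s t)"
      using ps that by (simp add: product_system_unitary)
    have Vw: "V s t w \<in> orth (E s \<times> E t) (V s t ` ?P (s + t))"
      using unitary_l2_orth_image[OF U orth_product_vectors_l2[of E V F1 F2 "s + t"]] that(3)
      by (simp add: orth_product_complement_eq)
    show ?thesis
      unfolding orth_product_complement_def
    proof (rule htensor_orthI[OF G_closed G_closed])
      show "V s t w \<in> l2 (E s \<times> E t)" using Vw orth_l2 by blast
      show "l2_inner (V s t w) (tensor c y) = 0" if "c \<in> cl_span (E s) (?P s)" "y \<in> l2 (E t)" for c y
      proof (rule l2_bounded_linear_orth_cl_span[OF l2_bounded_linear_tensor_left[OF that(2)]
            orth_product_vectors_l2 _ that(1)])
        have "(\<lambda>c. tensor c y) ` ?P s \<subseteq> V s t ` ?P (s + t)"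
        proof (rule image_subsetI)
          fix c assume "c \<in> ?P s"
          thus "tensor c y \<in> V s t ` ?P (s + t)"
            using orth_product_vectors_tensor_left[OF ps F2 \<open>0 < s\<close> \<open>0 < t\<close> _ that(2)] by force
        qed
        thus "V s t w \<in> orth (E s \<times> E t) ((\<lambda>c. tensor c y) ` ?P s)"
          using Vw orth_antimono by blast
      qed
      show "l2_inner (V s t w) (tensor x d) = 0" if "x \<in> l2 (E s)" "d \<in> cl_span (E t) (?P t)" for x d
      proof (rule l2_bounded_linear_orth_cl_span[OF l2_bounded_linear_tensor_right[OF that(1)]
            orth_product_vectors_l2 _ that(2)])
        have "(\<lambda>d. tensor x d) ` ?P t \<subseteq> V s t ` ?P (s + t)"
        proof (rule image_subsetI)
          fix d assume "d \<in> ?P t"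
          thus "tensor x d \<in> V s t ` ?P (s + t)"
            using orth_product_vectors_tensor_right[OF ps F1 \<open>0 < s\<close> \<open>0 < t\<close> that(1)] by force
        qed
        thus "V s t w \<in> orth (E s \<times> E t) ((\<lambda>d. tensor x d) ` ?P t)"
          using Vw orth_antimono by blast
      qed
    qed
  qed
  moreover have "closed_subspace (E t) (orth_product_complement E V F1 F2 t)" for t
    unfolding orth_product_complement_def by (rule closed_subspace_orth[OF cl_span_l2])
  ultimately show ?thesis unfolding inclusion_subsystem_def by blast
qed

theorem mainTheorem17:
  fixes E :: "real \<Rightarrow> 'i::countable set"
    and V :: "real \<Rightarrow> real \<Rightarrow> ('i \<Rightarrow> complex) \<Rightarrow> ('i \<times> 'i \<Rightarrow> complex)"
    and F1 F2 G G' :: "real \<Rightarrow> ('i \<Rightarrow> complex) set"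
  assumes "product_system E V"
    and "inclusion_subsystem E V F1"
    and "inclusion_subsystem E V F2"
  defines "G \<equiv> \<lambda>t. cl_span (E t) {z \<in> l2 (E t). \<exists>r x y. 0 < r \<and> r < t \<and>
              x \<in> orth (E r) (F1 r) \<and> y \<in> orth (E (t - r)) (F2 (t - r)) \<and>
              V r (t - r) z = tensor x y}"
    and "G' \<equiv> \<lambda>t. orth (E t) (G t)"
  shows "inclusion_subsystem E V G' \<and> (\<forall>t>0. F1 t \<subseteq> G' t \<and> F2 t \<subseteq> G' t)"
proof -
  have "G' = orth_product_complement E V F1 F2"
    unfolding G'_def G_def orth_product_complement_def orth_product_vectors_def ..
  thus ?thesis
    using inclusion_subsystem_orth_product_complement inclusion_subsystem_subset_orth_product_complement
      assms(1-3) by blast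
qed

end
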